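(* Let $L_0\in\mathbb{R}^{n\times n}$ have reduced SVD $L_0=U\Sigma V^*$, let $S_0\in\mathbb{R}^{n\times n}$ with support $\Omega$, and let $\lambda>0$. Assume $\|\mathcal{P}_\Omega\mathcal{P}_T\|<1$. Then $(L_0,S_0)$ is the unique solution of \[ \text{minimize } \|L\|_*+\lambda\|S\|_1\quad\text{subject to}\quad L+S=L_0+S_0 \] if there is a pair $(W,F)$ of $n\times n$ matrices obeying \[ UV^*+W=\lambda(\mathrm{sgn}(S_0)+F), \] with $\mathcal{P}_TW=0$, $\|W\|<1$, $\mathcal{P}_\Omega F=0$ and $\|F\|_\infty<1$.
   Context: $U,V\in\mathbb{R}^{n\times r}$ have orthonormal columns. $T=\{UX^*+YV^*: X,Y\in\mathbb{R}^{n\times r}\}$ and $\mathcal{P}_T$ is the orthogonal projection onto $T$ with respect to the trace inner product $\langle X,Y\rangle=\mathrm{trace}(X^*Y)$. $\mathcal{P}_\Omega X$ keeps the entries of $X$ in $\Omega$ and zeroes the others. For linear maps on matrices, $\|\cdot\|$ is the operator norm with respect to the Frobenius norm; for matrices, $\|W\|$ is the spectral norm (largest singular value), $\|F\|_\infty=\max_{ij}|F_{ij}|$, $\|\cdot\|_*$ the nuclear norm and $\|S\|_1=\sum_{ij}|S_{ij}|$. $\mathrm{sgn}(S_0)$ is the entrywise sign, with $\mathrm{sgn}(0)=0$. *)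

theory Defs
  imports Complex_Main "Jordan_Normal_Form.Matrix"
begin

definition trace_inner :: "nat \<Rightarrow> real mat \<Rightarrow> real mat \<Rightarrow> real" where
  "trace_inner n X Y = (\<Sum>i<n. \<Sum>j<n. X $$ (i,j) * Y $$ (i,j))"
  (* = trace(X^* Y) for n x n matrices *)

definition frob_norm :: "nat \<Rightarrow> real mat \<Rightarrow> real" where
  "frob_norm n X = sqrt (trace_inner n X X)"

definition tangent_space :: "nat \<Rightarrow> nat \<Rightarrow> real mat \<Rightarrow> real mat \<Rightarrow> real mat set" where
  "tangent_space n r U V =
     {U * transpose_mat X + Y * transpose_mat V | X Y. X \<in> carrier_mat n r \<and> Y \<in> carrier_mat n r}"

definition orth_proj :: "nat \<Rightarrow> real mat set \<Rightarrow> real mat \<Rightarrow> real mat" where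
  "orth_proj n T X = (THE Y. Y \<in> T \<and> (\<forall>Z\<in>T. trace_inner n (X - Y) Z = 0))"

definition P_T :: "nat \<Rightarrow> nat \<Rightarrow> real mat \<Rightarrow> real mat \<Rightarrow> real mat \<Rightarrow> real mat" where
  "P_T n r U V = orth_proj n (tangent_space n r U V)"

definition P_Omega :: "nat \<Rightarrow> (nat \<times> nat) set \<Rightarrow> real mat \<Rightarrow> real mat" where
  "P_Omega n \<Omega> X = mat n n (\<lambda>(i,j). if (i,j) \<in> \<Omega> then X $$ (i,j) else 0)"

definition support :: "nat \<Rightarrow> real mat \<Rightarrow> (nat \<times> nat) set" where
  "support n S = {(i,j). i < n \<and> j < n \<and> S $$ (i,j) \<noteq> 0}"

definition map_op_norm :: "nat \<Rightarrow> (real mat \<Rightarrow> real mat) \<Rightarrow> real" where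
  "map_op_norm n \<A> = Sup {frob_norm n (\<A> X) | X. X \<in> carrier_mat n n \<and> frob_norm n X \<le> 1}"

definition vec_norm :: "real vec \<Rightarrow> real" where
  "vec_norm v = sqrt (v \<bullet> v)"

definition spec_norm :: "nat \<Rightarrow> real mat \<Rightarrow> real" where
  "spec_norm n W = Sup {vec_norm (W *\<^sub>v v) | v. v \<in> carrier_vec n \<and> vec_norm v \<le> 1}"

definition max_norm :: "nat \<Rightarrow> real mat \<Rightarrow> real" where
  "max_norm n F = Max (insert 0 {\<bar>F $$ (i,j)\<bar> | i j. i < n \<and> j < n})"

definition l1_norm :: "nat \<Rightarrow> real mat \<Rightarrow> real" where
  "l1_norm n S = (\<Sum>i<n. \<Sum>j<n. \<bar>S $$ (i,j)\<bar>)"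

definition nuclear_norm :: "nat \<Rightarrow> real mat \<Rightarrow> real" where
  "nuclear_norm n A = (SOME s. \<exists>P Q \<sigma>.
      P \<in> carrier_mat n n \<and> Q \<in> carrier_mat n n \<and>
      transpose_mat P * P = 1\<^sub>m n \<and> transpose_mat Q * Q = 1\<^sub>m n \<and>
      (\<forall>i<n. \<sigma> i \<ge> 0) \<and> A = P * mat_diag n \<sigma> * transpose_mat Q \<and>
      s = (\<Sum>i<n. \<sigma> i))"

definition sgn_mat :: "nat \<Rightarrow> real mat \<Rightarrow> real mat" where
  "sgn_mat n S = mat n n (\<lambda>(i,j). sgn (S $$ (i,j)))"

definition reduced_svd :: "nat \<Rightarrow> nat \<Rightarrow> real mat \<Rightarrow> real mat \<Rightarrow> real mat \<Rightarrow> real mat \<Rightarrow> bool" where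
  "reduced_svd n r L U \<Sigma> V \<longleftrightarrow>
     U \<in> carrier_mat n r \<and> V \<in> carrier_mat n r \<and> \<Sigma> \<in> carrier_mat r r \<and>
     transpose_mat U * U = 1\<^sub>m r \<and> transpose_mat V * V = 1\<^sub>m r \<and>
     diagonal_mat \<Sigma> \<and> (\<forall>i<r. \<Sigma> $$ (i,i) > 0) \<and>
     L = U * \<Sigma> * transpose_mat V"

definition unique_solution :: "nat \<Rightarrow> real \<Rightarrow> real mat \<Rightarrow> real mat \<Rightarrow> real mat \<Rightarrow> bool" where
  "unique_solution n lam M L0 S0 \<longleftrightarrow>
     L0 \<in> carrier_mat n n \<and> S0 \<in> carrier_mat n n \<and> L0 + S0 = M \<and>
     (\<forall>L S. L \<in> carrier_mat n n \<and> S \<in> carrier_mat n n \<and> L + S = M \<and> (L, S) \<noteq> (L0, S0) \<longrightarrow>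
        nuclear_norm n L0 + lam * l1_norm n S0 < nuclear_norm n L + lam * l1_norm n S)"

end

theory Submission
  imports Defs "Jordan_Normal_Form.Determinant" "HOL-Analysis.Function_Topology"
begin

text \<open>For a competitor \<open>(L0 + H, S0 - H)\<close> let \<open>P diag(\<sigma>) Q\<^sup>T\<close> be an SVD of \<open>P\<^sub>T\<^sub>\<bottom> H\<close>.
  The matrix \<open>U V\<^sup>T + P\<^sub>T\<^sub>\<bottom>(P Q\<^sup>T)\<close> is a contraction, and pairing it with \<open>L0 + H\<close> gives
  \<open>\<parallel>L0 + H\<parallel>\<^sub>* \<ge> \<parallel>L0\<parallel>\<^sub>* + \<langle>U V\<^sup>T, H\<rangle> + \<parallel>P\<^sub>T\<^sub>\<bottom> H\<parallel>\<^sub>*\<close>. Entrywise,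
  \<open>\<parallel>S0 - H\<parallel>\<^sub>1 \<ge> \<parallel>S0\<parallel>\<^sub>1 - \<langle>sgn S0 + F, H\<rangle> + (1 - \<parallel>F\<parallel>\<^sub>\<infinity>) \<parallel>P\<^sub>\<Omega>\<^sub>\<bottom> H\<parallel>\<^sub>1\<close>.
  Substituting the certificate \<open>U V\<^sup>T + W = \<lambda> (sgn S0 + F)\<close> and using
  \<open>\<langle>W, H\<rangle> = \<langle>W, P\<^sub>T\<^sub>\<bottom> H\<rangle> \<le> \<parallel>W\<parallel> \<parallel>P\<^sub>T\<^sub>\<bottom> H\<parallel>\<^sub>*\<close>, the objective grows by at least
  \<open>(1 - \<parallel>W\<parallel>) \<parallel>P\<^sub>T\<^sub>\<bottom> H\<parallel>\<^sub>* + \<lambda> (1 - \<parallel>F\<parallel>\<^sub>\<infinity>) \<parallel>P\<^sub>\<Omega>\<^sub>\<bottom> H\<parallel>\<^sub>1\<close>. If this vanishes, \<open>H\<close> lies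
  both in \<open>T\<close> and in the span of \<open>\<Omega>\<close>, so \<open>P\<^sub>\<Omega> P\<^sub>T H = H\<close>, which \<open>\<parallel>P\<^sub>\<Omega> P\<^sub>T\<parallel> < 1\<close> only
  allows for \<open>H = 0\<close>.

  Since the nuclear norm is defined through an SVD, the argument needs that every real square
  matrix has one (obtained by successively maximising \<open>\<parallel>A v\<parallel>\<close> over unit vectors orthogonal to
  the earlier choices) and that the sum of singular values is the same for every SVD, which
  follows from the same duality.\<close>

section \<open>Euclidean geometry of real vectors\<close>

lemma scalar_prod_real_eq_sum: "(u::real vec) \<bullet> v = (\<Sum>i<dim_vec v. u $ i * v $ i)"
  unfolding scalar_prod_def by (simp add: lessThan_atLeast0)

lemma scalar_prod_self_eq_sum_squares: "(v::real vec) \<bullet> v = (\<Sum>i<dim_vec v. (v $ i)\<^sup>2)"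
  unfolding scalar_prod_real_eq_sum by (simp add: power2_eq_square)

lemma scalar_prod_self_nonneg[simp]: "(v::real vec) \<bullet> v \<ge> 0"
  unfolding scalar_prod_self_eq_sum_squares by (simp add: sum_nonneg)

lemma scalar_prod_self_eq_0D:
  assumes "v \<in> carrier_vec n" "(v::real vec) \<bullet> v = 0" shows "v = 0\<^sub>v n"
proof -
  have "\<forall>i\<in>{..<dim_vec v}. (v $ i)\<^sup>2 = 0"
    using assms(2) unfolding scalar_prod_self_eq_sum_squares
    by (subst sum_nonneg_eq_0_iff[symmetric]) auto
  thus ?thesis using assms(1) by (intro eq_vecI) auto
qed

lemma scalar_prod_self_pos:
  assumes "v \<in> carrier_vec n" "v \<noteq> 0\<^sub>v n" shows "(v::real vec) \<bullet> v > 0"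
  using scalar_prod_self_eq_0D[OF assms(1)] assms(2) scalar_prod_self_nonneg[of v]
  by (metis order_le_imp_less_or_eq)

lemma scalar_prod_self_normalize:
  assumes "v \<in> carrier_vec n" "v \<noteq> 0\<^sub>v n"
  shows "((1 / sqrt (v \<bullet> v)) \<cdot>\<^sub>v v) \<bullet> ((1 / sqrt (v \<bullet> v)) \<cdot>\<^sub>v (v::real vec)) = 1"
  using assms scalar_prod_self_pos[OF assms] by (simp add: power2_eq_square[symmetric] power_divide)

lemma Cauchy_Schwarz_sum:
  fixes a b :: "nat \<Rightarrow> real"
  shows "(\<Sum>i\<in>I. a i * b i)\<^sup>2 \<le> (\<Sum>i\<in>I. (a i)\<^sup>2) * (\<Sum>i\<in>I. (b i)\<^sup>2)"
proof -
  define A B C where "A = (\<Sum>i\<in>I. (a i)\<^sup>2)" and "B = (\<Sum>i\<in>I. (b i)\<^sup>2)" and "C = (\<Sum>i\<in>I. a i * b i)"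
  have "0 \<le> (\<Sum>i\<in>I. (B * a i - C * b i)\<^sup>2)" by (simp add: sum_nonneg)
  also have "\<dots> = B * B * (\<Sum>i\<in>I. (a i)\<^sup>2) - 2 * B * C * (\<Sum>i\<in>I. a i * b i) + C * C * (\<Sum>i\<in>I. (b i)\<^sup>2)"
    by (simp add: power2_eq_square algebra_simps sum.distrib sum_subtractf sum_distrib_left)
  also have "\<dots> = B * (A * B - C * C)"
    unfolding A_def[symmetric] B_def[symmetric] C_def[symmetric] by (simp add: algebra_simps)
  finally have "0 \<le> B * (A * B - C * C)" .
  moreover have "C = 0" if "B = 0"
  proof (cases "finite I")
    case True
    then have "\<forall>i\<in>I. (b i)\<^sup>2 = 0" using that unfolding B_def
      by (subst sum_nonneg_eq_0_iff[symmetric]) auto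
    then show ?thesis unfolding C_def by simp
  qed (simp add: C_def)
  moreover have "B \<ge> 0" unfolding B_def by (simp add: sum_nonneg)
  ultimately show ?thesis unfolding A_def[symmetric] B_def[symmetric] C_def[symmetric]
    by (cases "B = 0") (auto simp: zero_le_mult_iff power2_eq_square algebra_simps)
qed

lemma Cauchy_Schwarz_scalar_prod:
  assumes "u \<in> carrier_vec n" "v \<in> carrier_vec n"
  shows "((u::real vec) \<bullet> v)\<^sup>2 \<le> (u \<bullet> u) * (v \<bullet> v)"
  using Cauchy_Schwarz_sum[of "\<lambda>i. u $ i" "\<lambda>i. v $ i" "{..<n}"] assms
  unfolding scalar_prod_real_eq_sum by (simp add: power2_eq_square)

lemma abs_scalar_prod_le:
  assumes "u \<in> carrier_vec n" "v \<in> carrier_vec n"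
  shows "\<bar>(u::real vec) \<bullet> v\<bar> \<le> sqrt (u \<bullet> u) * sqrt (v \<bullet> v)"
  using real_sqrt_le_mono[OF Cauchy_Schwarz_scalar_prod[OF assms]] by (simp add: real_sqrt_mult)

lemma scalar_prod_self_add_smult:
  assumes x: "x \<in> carrier_vec n" and y: "y \<in> carrier_vec n"
  shows "(x + t \<cdot>\<^sub>v y) \<bullet> (x + t \<cdot>\<^sub>v y) = x \<bullet> x + 2 * t * (x \<bullet> y) + t\<^sup>2 * ((y::real vec) \<bullet> y)"
proof -
  have ty: "t \<cdot>\<^sub>v y \<in> carrier_vec n" using y by simp
  have "(x + t \<cdot>\<^sub>v y) \<bullet> (x + t \<cdot>\<^sub>v y) = x \<bullet> x + x \<bullet> (t \<cdot>\<^sub>v y) + ((t \<cdot>\<^sub>v y) \<bullet> x + (t \<cdot>\<^sub>v y) \<bullet> (t \<cdot>\<^sub>v y))"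
    using add_scalar_prod_distrib[OF x ty, of "x + t \<cdot>\<^sub>v y"]
      scalar_prod_add_distrib[OF x x ty] scalar_prod_add_distrib[OF ty x ty] x y by simp
  also have "\<dots> = x \<bullet> x + t * (x \<bullet> y) + (t * (y \<bullet> x) + t * t * (y \<bullet> y))"
    using x y by simp
  also have "y \<bullet> x = x \<bullet> y" using comm_scalar_prod[OF y x] .
  finally show ?thesis by (simp add: power2_eq_square algebra_simps)
qed

lemma mult_mat_vec_zero_vec: "(A::real mat) \<in> carrier_mat m n \<Longrightarrow> A *\<^sub>v 0\<^sub>v n = 0\<^sub>v m"
  by (rule eq_vecI) (auto simp: row_def)

lemma zero_mat_mult_vec: "(y::real vec) \<in> carrier_vec n \<Longrightarrow> 0\<^sub>m m n *\<^sub>v y = 0\<^sub>v m"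
  by (rule eq_vecI) (auto simp: scalar_prod_real_eq_sum)

lemma scalar_prod_mult_mat_vec_right:
  assumes "(M::real mat) \<in> carrier_mat m n" "v \<in> carrier_vec n" "w \<in> carrier_vec m"
  shows "w \<bullet> (M *\<^sub>v v) = (transpose_mat M *\<^sub>v w) \<bullet> v"
  using transpose_vec_mult_scalar[OF assms] by simp

lemma scalar_prod_self_mult_mat_vec:
  assumes M: "(M::real mat) \<in> carrier_mat m n" and v: "v \<in> carrier_vec n"
  shows "(M *\<^sub>v v) \<bullet> (M *\<^sub>v v) = v \<bullet> ((transpose_mat M * M) *\<^sub>v v)"
proof -
  have "v \<bullet> ((transpose_mat M * M) *\<^sub>v v) = (transpose_mat M *\<^sub>v (M *\<^sub>v v)) \<bullet> v"
    using M v by (simp add: comm_scalar_prod[of _ n])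
  also have "\<dots> = (M *\<^sub>v v) \<bullet> (M *\<^sub>v v)"
    using scalar_prod_mult_mat_vec_right[OF M v, of "M *\<^sub>v v"] M v by simp
  finally show ?thesis by simp
qed

lemma scalar_prod_self_mult_isometry:
  assumes "(M::real mat) \<in> carrier_mat m n" "v \<in> carrier_vec n" "transpose_mat M * M = 1\<^sub>m n"
  shows "(M *\<^sub>v v) \<bullet> (M *\<^sub>v v) = v \<bullet> v"
  using scalar_prod_self_mult_mat_vec[OF assms(1,2)] assms(2,3) by simp

lemma orthogonal_mat_right_inverse:
  assumes "(Q::real mat) \<in> carrier_mat n n" "transpose_mat Q * Q = 1\<^sub>m n"
  shows "Q * transpose_mat Q = 1\<^sub>m n"
  using mat_mult_left_right_inverse[of "transpose_mat Q" n Q] assms by simp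

lemma exists_nonzero_orthogonal_vec:
  assumes k: "k < n" and q: "\<And>i. i < k \<Longrightarrow> q i \<in> carrier_vec n"
  shows "\<exists>x\<in>carrier_vec n. x \<noteq> 0\<^sub>v n \<and> (\<forall>i<k. q i \<bullet> x = (0::real))"
proof -
  define c where "c i = (if i < k then q i else 0\<^sub>v n)" for i
  define M where "M = mat\<^sub>r n n (\<lambda>i. if i = k then 0\<^sub>v n else c i)"
  have Mc: "M \<in> carrier_mat n n" unfolding M_def by simp
  have "Determinant.det M = 0" unfolding M_def
    by (rule det_row_0[OF k]) (use q in \<open>auto simp: c_def\<close>)
  then obtain v where v: "v \<in> carrier_vec n" "v \<noteq> 0\<^sub>v n" "M *\<^sub>v v = 0\<^sub>v n"
    using det_0_iff_vec_prod_zero_field[OF Mc] by blast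
  have "q i \<bullet> v = 0" if i: "i < k" for i
  proof -
    have "(M *\<^sub>v v) $ i = 0" using v(3) i k by simp
    moreover have "row M i = q i" unfolding M_def using i k q[OF i] by (simp add: c_def)
    ultimately show ?thesis using i k Mc by simp
  qed
  thus ?thesis using v by blast
qed

lemma exists_unit_vec_orthogonal:
  assumes "finite Vs" "card Vs < n" "Vs \<subseteq> carrier_vec n"
  shows "\<exists>x\<in>carrier_vec n. x \<bullet> x = 1 \<and> (\<forall>w\<in>Vs. w \<bullet> x = (0::real))"
proof -
  obtain vs where vs: "set vs = Vs" "distinct vs" using finite_distinct_list[OF assms(1)] by blast
  have "length vs < n" using assms(2) vs distinct_card by fastforce
  moreover have "vs ! i \<in> carrier_vec n" if "i < length vs" for i using assms(3) vs(1) that by auto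
  ultimately obtain x where x: "x \<in> carrier_vec n" "x \<noteq> 0\<^sub>v n" "\<forall>i<length vs. vs ! i \<bullet> x = (0::real)"
    using exists_nonzero_orthogonal_vec[of "length vs" n "(!) vs"] by blast
  have "\<forall>w\<in>Vs. w \<bullet> x = 0" using x(3) vs(1) by (metis in_set_conv_nth)
  with x assms(3) scalar_prod_self_normalize[OF x(1,2)] show ?thesis
    by (intro bexI[of _ "(1 / sqrt (x \<bullet> x)) \<cdot>\<^sub>v x"]) (auto simp: subset_iff)
qed

definition orthonormal :: "nat \<Rightarrow> nat set \<Rightarrow> (nat \<Rightarrow> real vec) \<Rightarrow> bool" where
  "orthonormal n I g \<longleftrightarrow> (\<forall>i\<in>I. g i \<in> carrier_vec n) \<and>
     (\<forall>i\<in>I. \<forall>j\<in>I. g i \<bullet> g j = (if i = j then 1 else 0))"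

lemma orthonormal_extend:
  assumes "I \<subseteq> {..<n}" "orthonormal n I g"
  shows "\<exists>g'. (\<forall>i\<in>I. g' i = g i) \<and> orthonormal n {..<n} g'"
  using assms
proof (induction "card ({..<n} - I)" arbitrary: I g)
  case 0
  then have "I = {..<n}" by auto
  then show ?case using 0 by blast
next
  case (Suc d)
  obtain m where m: "m \<in> {..<n} - I" using Suc.hyps(2)
    by (metis card.empty ex_in_conv nat.distinct(1))
  have finI: "finite I" using Suc.prems(1) finite_subset by blast
  have "card I < n"
    using psubset_card_mono[of "{..<n}" I] Suc.prems(1) m by auto
  hence "card (g ` I) < n" using card_image_le[OF finI, of g] by linarith
  moreover have "g ` I \<subseteq> carrier_vec n" using Suc.prems(2) unfolding orthonormal_def by auto
  ultimately obtain x where x: "x \<in> carrier_vec n" "x \<bullet> x = 1" "\<forall>i\<in>I. g i \<bullet> x = 0"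
    using exists_unit_vec_orthogonal[of "g ` I" n] finI by blast
  have xg: "x \<bullet> g i = 0" if "i \<in> I" for i
    using x comm_scalar_prod[of x n "g i"] Suc.prems(2) that unfolding orthonormal_def by auto
  have "orthonormal n (insert m I) (g(m := x))"
    using Suc.prems(2) m x xg unfolding orthonormal_def by auto
  moreover have "d = card ({..<n} - insert m I)" using Suc.hyps(2) m
    by (metis Diff_insert card_Diff_singleton_if diff_Suc_1 finite_Diff finite_lessThan)
  moreover have "insert m I \<subseteq> {..<n}" using Suc.prems(1) m by auto
  ultimately obtain g' where "\<forall>i\<in>insert m I. g' i = (g(m := x)) i" "orthonormal n {..<n} g'"
    using Suc.hyps(1) by blast
  then show ?case using m by (intro exI[of _ g']) auto
qed

section \<open>Existence of a singular value decomposition\<close>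

lemma compact_constrained_unit_sphere:
  "compact {f::nat \<Rightarrow> real. (\<forall>i\<ge>n. f i = 0) \<and> (\<Sum>j<n. (f j)\<^sup>2) = 1 \<and> (\<forall>i<k. (\<Sum>j<n. c i j * f j) = 0)}"
  (is "compact ?D")
proof -
  define K where "K = PiE UNIV (\<lambda>i::nat. if i < n then {-1..1::real} else {0})"
  have "compactin (product_topology (\<lambda>i. euclidean) UNIV) K"
    unfolding K_def compactin_PiE by (intro disjI2 ballI) simp
  hence "compact K" by (simp add: euclidean_product_topology)
  moreover have "closed ({f. (\<Sum>j<n. (f j)\<^sup>2) = 1} \<inter> (\<Inter>i\<in>{..<k}. {f. (\<Sum>j<n. c i j * f j) = 0}))"
    by (intro closed_Int closed_INT ballI closed_Collect_eq continuous_intros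
        continuous_on_product_coordinates)
  ultimately have "compact (K \<inter> ({f. (\<Sum>j<n. (f j)\<^sup>2) = 1} \<inter> (\<Inter>i\<in>{..<k}. {f. (\<Sum>j<n. c i j * f j) = 0})))"
    by (rule compact_Int_closed)
  moreover have "\<bar>f j\<bar> \<le> 1" if "(\<Sum>j<n. (f j)\<^sup>2) = 1" "j < n" for f :: "nat \<Rightarrow> real" and j
  proof -
    have "(f j)\<^sup>2 \<le> (\<Sum>j<n. (f j)\<^sup>2)" by (rule member_le_sum) (use that in auto)
    thus ?thesis using that(1) abs_le_square_iff[of "f j" 1] by simp
  qed
  moreover have "K \<inter> ({f. (\<Sum>j<n. (f j)\<^sup>2) = 1} \<inter> (\<Inter>i\<in>{..<k}. {f. (\<Sum>j<n. c i j * f j) = 0})) = ?D"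
    using calculation(2)
    by (auto simp: K_def PiE_iff abs_le_iff not_less) (metis not_less singletonD)
  ultimately show ?thesis by simp
qed

lemma exists_max_stretch_on_constrained_sphere:
  fixes A :: "real mat" and q :: "nat \<Rightarrow> real vec"
  assumes A: "A \<in> carrier_mat n n" and ex: "\<exists>x\<in>carrier_vec n. x \<bullet> x = 1 \<and> (\<forall>i<k. q i \<bullet> x = 0)"
  shows "\<exists>u\<in>carrier_vec n. u \<bullet> u = 1 \<and> (\<forall>i<k. q i \<bullet> u = 0) \<and>
    (\<forall>w\<in>carrier_vec n. w \<bullet> w = 1 \<and> (\<forall>i<k. q i \<bullet> w = 0) \<longrightarrow> (A *\<^sub>v w) \<bullet> (A *\<^sub>v w) \<le> (A *\<^sub>v u) \<bullet> (A *\<^sub>v u))"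
proof -
  define D where
    "D = {f::nat \<Rightarrow> real. (\<forall>i\<ge>n. f i = 0) \<and> (\<Sum>j<n. (f j)\<^sup>2) = 1 \<and> (\<forall>i<k. (\<Sum>j<n. q i $ j * f j) = 0)}"
  define g where "g f = (\<Sum>i<n. (\<Sum>j<n. A $$ (i,j) * f j)\<^sup>2)" for f :: "nat \<Rightarrow> real"
  define emb where "emb v = (\<lambda>j. if j < n then v $ j else 0)" for v :: "real vec"
  have emb_sum: "(\<Sum>j<n. G j (emb v j)) = (\<Sum>j<n. G j (v $ j))" for G :: "nat \<Rightarrow> real \<Rightarrow> real" and v
    by (rule sum.cong) (auto simp: emb_def)
  have emb_D: "emb v \<in> D \<longleftrightarrow> v \<bullet> v = 1 \<and> (\<forall>i<k. q i \<bullet> v = 0)" if "v \<in> carrier_vec n" for v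
    using that emb_sum[of "\<lambda>_ x. x\<^sup>2" v] emb_sum[of "\<lambda>j x. q _ $ j * x" v]
    by (auto simp: D_def emb_def scalar_prod_self_eq_sum_squares scalar_prod_real_eq_sum)
  have g_emb: "g (emb v) = (A *\<^sub>v v) \<bullet> (A *\<^sub>v v)" if "v \<in> carrier_vec n" for v
  proof -
    have "(A *\<^sub>v v) \<bullet> (A *\<^sub>v v) = (\<Sum>i<n. ((A *\<^sub>v v) $ i)\<^sup>2)"
      using A by (simp add: scalar_prod_self_eq_sum_squares)
    also have "\<dots> = g (emb v)"
      unfolding g_def using A that
      by (intro sum.cong refl)
        (auto simp: scalar_prod_real_eq_sum emb_def intro!: sum.cong arg_cong[where f = power2])
    finally show ?thesis by simp
  qed
  have "continuous_on UNIV g" unfolding g_def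
    by (intro continuous_intros continuous_on_product_coordinates)
  moreover have "D \<noteq> {}" using ex emb_D by blast
  ultimately obtain f where f: "f \<in> D" "\<forall>h\<in>D. g h \<le> g f"
    using continuous_attains_sup[of D g] compact_constrained_unit_sphere[of n k "\<lambda>i j. q i $ j"]
      continuous_on_subset unfolding D_def by blast
  define u where "u = vec n f"
  have u: "u \<in> carrier_vec n" "emb u = f" using f(1) by (auto simp: emb_def u_def D_def)
  show ?thesis
  proof (intro bexI[OF _ u(1)] conjI ballI impI allI)
    show "u \<bullet> u = 1" "\<And>i. i < k \<Longrightarrow> q i \<bullet> u = 0" using emb_D[OF u(1)] f(1) u(2) by auto
    fix w assume w: "w \<in> carrier_vec n" "w \<bullet> w = 1 \<and> (\<forall>i<k. q i \<bullet> w = 0)"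
    then have "g (emb w) \<le> g (emb u)" using emb_D f u(2) by auto
    then show "(A *\<^sub>v w) \<bullet> (A *\<^sub>v w) \<le> (A *\<^sub>v u) \<bullet> (A *\<^sub>v u)" using g_emb w(1) u(1) by simp
  qed
qed

lemma exists_max_stretch_direction:
  fixes A :: "real mat" and q :: "nat \<Rightarrow> real vec"
  assumes A: "A \<in> carrier_mat n n" and q: "\<And>i. i < k \<Longrightarrow> q i \<in> carrier_vec n" and k: "k < n"
  shows "\<exists>u\<in>carrier_vec n. u \<bullet> u = 1 \<and> (\<forall>i<k. q i \<bullet> u = 0) \<and>
    (\<forall>w\<in>carrier_vec n. (\<forall>i<k. q i \<bullet> w = 0) \<longrightarrow> (A *\<^sub>v w) \<bullet> (A *\<^sub>v w) \<le> ((A *\<^sub>v u) \<bullet> (A *\<^sub>v u)) * (w \<bullet> w))"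
proof -
  have "card (q ` {..<k}) < n" using card_image_le[of "{..<k}" q] k by simp
  then have "\<exists>x\<in>carrier_vec n. x \<bullet> x = 1 \<and> (\<forall>i<k. q i \<bullet> x = 0)"
    using exists_unit_vec_orthogonal[of "q ` {..<k}" n] q by auto
  from exists_max_stretch_on_constrained_sphere[OF A this]
  obtain u where u: "u \<in> carrier_vec n" "u \<bullet> u = 1" "\<forall>i<k. q i \<bullet> u = 0"
    and umax: "\<forall>w\<in>carrier_vec n. w \<bullet> w = 1 \<and> (\<forall>i<k. q i \<bullet> w = 0) \<longrightarrow>
      (A *\<^sub>v w) \<bullet> (A *\<^sub>v w) \<le> (A *\<^sub>v u) \<bullet> (A *\<^sub>v u)"
    by blast
  have "(A *\<^sub>v w) \<bullet> (A *\<^sub>v w) \<le> ((A *\<^sub>v u) \<bullet> (A *\<^sub>v u)) * (w \<bullet> w)"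
    if w: "w \<in> carrier_vec n" "\<forall>i<k. q i \<bullet> w = 0" for w
  proof (cases "w = 0\<^sub>v n")
    case True
    thus ?thesis using mult_mat_vec_zero_vec[OF A] by simp
  next
    case False
    define c where "c = 1 / sqrt (w \<bullet> w)"
    have cc: "c * c * (w \<bullet> w) = 1"
      using scalar_prod_self_pos[OF w(1) False] unfolding c_def
      by (simp add: power2_eq_square[symmetric] power_divide)
    have "(c \<cdot>\<^sub>v w) \<bullet> (c \<cdot>\<^sub>v w) = 1" "\<forall>i<k. q i \<bullet> (c \<cdot>\<^sub>v w) = 0"
      using cc w q by auto
    then have "(A *\<^sub>v (c \<cdot>\<^sub>v w)) \<bullet> (A *\<^sub>v (c \<cdot>\<^sub>v w)) \<le> (A *\<^sub>v u) \<bullet> (A *\<^sub>v u)"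
      using umax w(1) by simp
    moreover have "(A *\<^sub>v (c \<cdot>\<^sub>v w)) \<bullet> (A *\<^sub>v (c \<cdot>\<^sub>v w)) = c * c * ((A *\<^sub>v w) \<bullet> (A *\<^sub>v w))"
      using A w by (simp add: mult_mat_vec)
    ultimately have "(w \<bullet> w) * (c * c * ((A *\<^sub>v w) \<bullet> (A *\<^sub>v w))) \<le> (w \<bullet> w) * ((A *\<^sub>v u) \<bullet> (A *\<^sub>v u))"
      by (simp add: mult_left_mono)
    moreover have "(w \<bullet> w) * (c * c * ((A *\<^sub>v w) \<bullet> (A *\<^sub>v w))) = (A *\<^sub>v w) \<bullet> (A *\<^sub>v w)"
      using cc by (simp add: algebra_simps)
    ultimately show ?thesis by (simp add: mult.commute)
  qed
  with u show ?thesis by blast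
qed

lemma quadratic_nonpos_imp_linear_coeff_zero:
  fixes a b :: real assumes "\<And>t. 2 * t * a + t\<^sup>2 * b \<le> 0" shows "a = 0"
proof -
  define c where "c = \<bar>b\<bar> + 1"
  have c: "c > 0" "2 * c + b > 0" unfolding c_def by (auto simp: abs_if)
  have "(2 * (a / c) * a + (a / c)\<^sup>2 * b) * c\<^sup>2 = a\<^sup>2 * (2 * c + b)"
    using c by (simp add: field_simps power2_eq_square)
  moreover have "(2 * (a / c) * a + (a / c)\<^sup>2 * b) * c\<^sup>2 \<le> 0"
    using assms[of "a / c"] by (simp add: mult_nonpos_nonneg)
  ultimately have "a\<^sup>2 \<le> 0" using c by (simp add: mult_le_0_iff)
  thus ?thesis by simp
qed

text \<open>First-order optimality of a maximal stretch direction \<open>u\<close>: for \<open>w \<perp> u\<close>, the quadratic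
  \<open>t \<mapsto> \<parallel>A (u + t w)\<parallel>\<^sup>2 - \<parallel>A u\<parallel>\<^sup>2 \<parallel>u + t w\<parallel>\<^sup>2\<close> is nonpositive.\<close>
lemma max_stretch_direction_orthogonal_images:
  fixes A :: "real mat" and q :: "nat \<Rightarrow> real vec"
  assumes A: "A \<in> carrier_mat n n" and q: "\<And>i. i < k \<Longrightarrow> q i \<in> carrier_vec n"
    and u: "u \<in> carrier_vec n" "u \<bullet> u = 1" "\<forall>i<k. q i \<bullet> u = 0"
    and umax: "\<forall>w\<in>carrier_vec n. (\<forall>i<k. q i \<bullet> w = 0) \<longrightarrow>
      (A *\<^sub>v w) \<bullet> (A *\<^sub>v w) \<le> ((A *\<^sub>v u) \<bullet> (A *\<^sub>v u)) * (w \<bullet> w)"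
    and w: "w \<in> carrier_vec n" "\<forall>i<k. q i \<bullet> w = 0" "u \<bullet> w = 0"
  shows "(A *\<^sub>v u) \<bullet> (A *\<^sub>v w) = 0"
proof (rule quadratic_nonpos_imp_linear_coeff_zero)
  fix t :: real
  define x where "x = u + t \<cdot>\<^sub>v w"
  have xc: "x \<in> carrier_vec n" unfolding x_def using u w by simp
  have "\<forall>i<k. q i \<bullet> x = 0"
    unfolding x_def using scalar_prod_add_distrib[OF q u(1), of _ "t \<cdot>\<^sub>v w"] q u w by simp
  hence "(A *\<^sub>v x) \<bullet> (A *\<^sub>v x) \<le> ((A *\<^sub>v u) \<bullet> (A *\<^sub>v u)) * (x \<bullet> x)" using umax xc by blast
  moreover have "x \<bullet> x = 1 + t\<^sup>2 * (w \<bullet> w)"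
    unfolding x_def using scalar_prod_self_add_smult[OF u(1) w(1)] u w by simp
  moreover have "A *\<^sub>v x = A *\<^sub>v u + t \<cdot>\<^sub>v (A *\<^sub>v w)"
    unfolding x_def using A u w by (simp add: mult_add_distrib_mat_vec mult_mat_vec)
  moreover have "(A *\<^sub>v u + t \<cdot>\<^sub>v (A *\<^sub>v w)) \<bullet> (A *\<^sub>v u + t \<cdot>\<^sub>v (A *\<^sub>v w)) =
     (A *\<^sub>v u) \<bullet> (A *\<^sub>v u) + 2 * t * ((A *\<^sub>v u) \<bullet> (A *\<^sub>v w)) + t\<^sup>2 * ((A *\<^sub>v w) \<bullet> (A *\<^sub>v w))"
    by (rule scalar_prod_self_add_smult[where n = n]) (use A u w in auto)
  ultimately show "2 * t * ((A *\<^sub>v u) \<bullet> (A *\<^sub>v w)) +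
      t\<^sup>2 * ((A *\<^sub>v w) \<bullet> (A *\<^sub>v w) - ((A *\<^sub>v u) \<bullet> (A *\<^sub>v u)) * (w \<bullet> w)) \<le> 0"
    by (simp add: algebra_simps)
qed

lemma exists_orthonormal_orthogonal_images:
  fixes A :: "real mat"
  assumes A: "A \<in> carrier_mat n n"
  shows "k \<le> n \<Longrightarrow> \<exists>q. orthonormal n {..<k} q \<and>
    (\<forall>i<k. \<forall>w\<in>carrier_vec n. (\<forall>j\<le>i. q j \<bullet> w = 0) \<longrightarrow> (A *\<^sub>v q i) \<bullet> (A *\<^sub>v w) = 0)"
proof (induction k)
  case 0
  then show ?case by (auto simp: orthonormal_def)
next
  case (Suc k)
  then obtain q where on: "orthonormal n {..<k} q"
    and inv: "\<forall>i<k. \<forall>w\<in>carrier_vec n. (\<forall>j\<le>i. q j \<bullet> w = 0) \<longrightarrow> (A *\<^sub>v q i) \<bullet> (A *\<^sub>v w) = 0" by auto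
  have qc: "\<And>i. i < k \<Longrightarrow> q i \<in> carrier_vec n" using on unfolding orthonormal_def by auto
  obtain u where u: "u \<in> carrier_vec n" "u \<bullet> u = 1" "\<forall>i<k. q i \<bullet> u = 0"
    and umax: "\<forall>w\<in>carrier_vec n. (\<forall>i<k. q i \<bullet> w = 0) \<longrightarrow>
      (A *\<^sub>v w) \<bullet> (A *\<^sub>v w) \<le> ((A *\<^sub>v u) \<bullet> (A *\<^sub>v u)) * (w \<bullet> w)"
    using exists_max_stretch_direction[OF A, where q = q and k = k] qc Suc.prems by auto
  have uq: "u \<bullet> q i = 0" if "i < k" for i using u(3) that comm_scalar_prod[OF u(1) qc[OF that]]
    by simp
  have "orthonormal n {..<Suc k} (q(k := u))"
    using on u uq qc unfolding orthonormal_def by (auto simp: less_Suc_eq)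
  moreover have "(A *\<^sub>v (q(k := u)) i) \<bullet> (A *\<^sub>v w) = 0"
    if i: "i < Suc k" and w: "w \<in> carrier_vec n" and hw: "\<forall>j\<le>i. (q(k := u)) j \<bullet> w = 0" for i w
  proof (cases "i < k")
    case True
    thus ?thesis using inv hw w by auto
  next
    case False
    hence "i = k" using i by simp
    moreover have "q j \<bullet> w = 0" if "j < k" for j using hw[rule_format, of j] \<open>i = k\<close> that by simp
    moreover have "u \<bullet> w = 0" using hw[rule_format, of k] \<open>i = k\<close> by simp
    ultimately show ?thesis using max_stretch_direction_orthogonal_images[OF A qc u umax w] by auto
  qed
  ultimately show ?case by blast
qed

lemma exists_orthonormal_scaled_images:
  fixes A :: "real mat"
  assumes A: "A \<in> carrier_mat n n" and onq: "orthonormal n {..<n} q"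
    and ortho: "\<And>i j. i < n \<Longrightarrow> j < n \<Longrightarrow> i \<noteq> j \<Longrightarrow> (A *\<^sub>v q i) \<bullet> (A *\<^sub>v q j) = 0"
  shows "\<exists>p \<sigma>. orthonormal n {..<n} p \<and> (\<forall>i. \<sigma> i \<ge> 0) \<and> (\<forall>j<n. A *\<^sub>v q j = \<sigma> j \<cdot>\<^sub>v p j)"
proof -
  have qc: "q i \<in> carrier_vec n" if "i < n" for i using onq that unfolding orthonormal_def by auto
  define \<sigma> where "\<sigma> i = sqrt ((A *\<^sub>v q i) \<bullet> (A *\<^sub>v q i))" for i
  have \<sigma>_sq: "\<sigma> i * \<sigma> i = (A *\<^sub>v q i) \<bullet> (A *\<^sub>v q i)" for i unfolding \<sigma>_def by simp
  define I where "I = {i. i < n \<and> \<sigma> i > 0}"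
  define p0 where "p0 i = (1 / \<sigma> i) \<cdot>\<^sub>v (A *\<^sub>v q i)" for i
  have "orthonormal n I p0" unfolding orthonormal_def
  proof (intro conjI ballI)
    fix i j assume i: "i \<in> I" and j: "j \<in> I"
    show "p0 i \<in> carrier_vec n" using A qc i unfolding p0_def I_def by simp
    have "p0 i \<bullet> p0 j = (1 / \<sigma> i) * (1 / \<sigma> j) * ((A *\<^sub>v q i) \<bullet> (A *\<^sub>v q j))"
      using A qc i j unfolding p0_def I_def by simp
    also have "\<dots> = (if i = j then 1 else 0)"
      using i j ortho \<sigma>_sq[of i] unfolding I_def by (auto simp flip: \<sigma>_sq)
    finally show "p0 i \<bullet> p0 j = (if i = j then 1 else 0)" .
  qed
  then obtain p where pI: "\<forall>i\<in>I. p i = p0 i" and onp: "orthonormal n {..<n} p"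
    using orthonormal_extend[of I n p0] unfolding I_def by auto
  have "A *\<^sub>v q j = \<sigma> j \<cdot>\<^sub>v p j" if j: "j < n" for j
  proof (cases "\<sigma> j > 0")
    case True
    thus ?thesis using pI j A qc[OF j] unfolding p0_def I_def by (simp add: smult_smult_assoc)
  next
    case False
    hence "\<sigma> j = 0" using scalar_prod_self_nonneg[of "A *\<^sub>v q j"] by (simp add: \<sigma>_def)
    hence "A *\<^sub>v q j = 0\<^sub>v n" using scalar_prod_self_eq_0D[of "A *\<^sub>v q j" n] A qc[OF j] \<sigma>_sq[of j]
      by simp
    moreover have "p j \<in> carrier_vec n" using onp j unfolding orthonormal_def by auto
    ultimately show ?thesis using \<open>\<sigma> j = 0\<close> by (auto intro!: eq_vecI)
  qed
  moreover have "\<sigma> i \<ge> 0" for i unfolding \<sigma>_def by simp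
  ultimately show ?thesis using onp by blast
qed

definition mat_of_col_fun :: "nat \<Rightarrow> (nat \<Rightarrow> real vec) \<Rightarrow> real mat" where
  "mat_of_col_fun n f = mat n n (\<lambda>(i,j). f j $ i)"

lemma mat_of_col_fun_carrier[simp]:
  "mat_of_col_fun n f \<in> carrier_mat n n"
  "dim_row (mat_of_col_fun n f) = n" "dim_col (mat_of_col_fun n f) = n"
  unfolding mat_of_col_fun_def by simp_all

lemma col_mat_of_col_fun: "j < n \<Longrightarrow> f j \<in> carrier_vec n \<Longrightarrow> col (mat_of_col_fun n f) j = f j"
  by (rule eq_vecI) (auto simp: mat_of_col_fun_def)

lemma orthogonal_mat_of_col_fun:
  assumes "orthonormal n {..<n} f"
  shows "transpose_mat (mat_of_col_fun n f) * mat_of_col_fun n f = 1\<^sub>m n"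
proof (rule eq_matI)
  fix i j assume i: "i < dim_row (1\<^sub>m n)" and j: "j < dim_col (1\<^sub>m n)"
  have "f i \<in> carrier_vec n" "f j \<in> carrier_vec n" using assms i j unfolding orthonormal_def by auto
  with i j have "(transpose_mat (mat_of_col_fun n f) * mat_of_col_fun n f) $$ (i,j) = f i \<bullet> f j"
    by (simp add: col_mat_of_col_fun)
  also have "\<dots> = 1\<^sub>m n $$ (i,j)" using assms i j unfolding orthonormal_def by auto
  finally show "(transpose_mat (mat_of_col_fun n f) * mat_of_col_fun n f) $$ (i,j) = 1\<^sub>m n $$ (i,j)" .
qed auto

theorem svd_exists:
  fixes A :: "real mat"
  assumes A: "A \<in> carrier_mat n n"
  shows "\<exists>P Q \<sigma>. P \<in> carrier_mat n n \<and> Q \<in> carrier_mat n n \<and>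
      transpose_mat P * P = 1\<^sub>m n \<and> transpose_mat Q * Q = 1\<^sub>m n \<and>
      (\<forall>i<n. \<sigma> i \<ge> 0) \<and> A = P * mat_diag n \<sigma> * transpose_mat Q"
proof -
  obtain q where onq: "orthonormal n {..<n} q"
    and inv: "\<forall>i<n. \<forall>w\<in>carrier_vec n. (\<forall>j\<le>i. q j \<bullet> w = 0) \<longrightarrow> (A *\<^sub>v q i) \<bullet> (A *\<^sub>v w) = 0"
    using exists_orthonormal_orthogonal_images[OF A, of n] by auto
  have qc: "q i \<in> carrier_vec n" if "i < n" for i using onq that unfolding orthonormal_def by auto
  have lt: "(A *\<^sub>v q i) \<bullet> (A *\<^sub>v q j) = 0" if "i < j" "j < n" for i j
    using inv[rule_format, of i "q j"] onq that qc unfolding orthonormal_def by auto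
  have "(A *\<^sub>v q i) \<bullet> (A *\<^sub>v q j) = 0" if "i < n" "j < n" "i \<noteq> j" for i j
    using lt[of i j] lt[of j i] that comm_scalar_prod[of "A *\<^sub>v q i" n "A *\<^sub>v q j"] A qc
    by (cases "i < j") auto
  then obtain p \<sigma> where onp: "orthonormal n {..<n} p" and \<sigma>: "\<forall>i. \<sigma> i \<ge> 0"
    and Aq: "\<forall>j<n. A *\<^sub>v q j = \<sigma> j \<cdot>\<^sub>v p j"
    using exists_orthonormal_scaled_images[OF A onq] by blast
  have pc: "p j \<in> carrier_vec n" if "j < n" for j using onp that unfolding orthonormal_def by auto
  define P Q where "P = mat_of_col_fun n p" and "Q = mat_of_col_fun n q"
  have P: "P \<in> carrier_mat n n" and Q: "Q \<in> carrier_mat n n" unfolding P_def Q_def by auto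
  have QO: "transpose_mat Q * Q = 1\<^sub>m n" unfolding Q_def by (rule orthogonal_mat_of_col_fun[OF onq])
  have AQ: "A * Q = P * mat_diag n \<sigma>"
  proof (rule eq_matI)
    fix i j assume "i < dim_row (P * mat_diag n \<sigma>)" "j < dim_col (P * mat_diag n \<sigma>)"
    hence i: "i < n" and j: "j < n" using P mat_diag_dim[of n \<sigma>] by auto
    have "(A * Q) $$ (i,j) = (A *\<^sub>v q j) $ i"
      unfolding Q_def using A i j qc[OF j] by (simp add: col_mat_of_col_fun)
    also have "\<dots> = (P * mat_diag n \<sigma>) $$ (i,j)"
      using Aq j i pc[OF j] unfolding mat_diag_mult_right[OF P]
      by (simp add: P_def mat_of_col_fun_def)
    finally show "(A * Q) $$ (i,j) = (P * mat_diag n \<sigma>) $$ (i,j)" .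
  qed (use A Q P in \<open>simp_all add: mat_diag_def\<close>)
  have "A = A * (Q * transpose_mat Q)" using orthogonal_mat_right_inverse[OF Q QO] A by simp
  also have "\<dots> = P * mat_diag n \<sigma> * transpose_mat Q" using A Q
    by (simp add: assoc_mult_mat flip: AQ)
  finally show ?thesis
    using P Q QO \<sigma> orthogonal_mat_of_col_fun[OF onp, folded P_def]
    by (intro exI[of _ P] exI[of _ Q] exI[of _ \<sigma>]) simp
qed

section \<open>The trace inner product\<close>

lemma index_mult_mat_sum:
  assumes "(A::real mat) \<in> carrier_mat n m" "B \<in> carrier_mat m p" "i < n" "j < p"
  shows "(A * B) $$ (i,j) = (\<Sum>k<m. A $$ (i,k) * B $$ (k,j))"
  using assms by (auto simp: scalar_prod_real_eq_sum intro!: sum.cong)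

lemma trace_inner_commute: "trace_inner n X Y = trace_inner n Y X"
  unfolding trace_inner_def by (simp add: mult.commute)

lemma trace_inner_mult_left:
  assumes A: "(A::real mat) \<in> carrier_mat n n" and Z: "Z \<in> carrier_mat n n" and Y: "Y \<in> carrier_mat n n"
  shows "trace_inner n (A * Z) Y = trace_inner n Z (transpose_mat A * Y)"
proof -
  have "trace_inner n (A * Z) Y = (\<Sum>i<n. \<Sum>j<n. (\<Sum>k<n. A $$ (i,k) * Z $$ (k,j)) * Y $$ (i,j))"
    unfolding trace_inner_def by (intro sum.cong refl) (simp add: index_mult_mat_sum[OF A Z])
  also have "\<dots> = (\<Sum>i<n. \<Sum>j<n. \<Sum>k<n. Z $$ (k,j) * (A $$ (i,k) * Y $$ (i,j)))"
    by (simp add: sum_distrib_left sum_distrib_right algebra_simps)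
  also have "\<dots> = (\<Sum>i<n. \<Sum>k<n. \<Sum>j<n. Z $$ (k,j) * (A $$ (i,k) * Y $$ (i,j)))"
    by (intro sum.cong refl sum.swap)
  also have "\<dots> = (\<Sum>k<n. \<Sum>i<n. \<Sum>j<n. Z $$ (k,j) * (A $$ (i,k) * Y $$ (i,j)))"
    by (rule sum.swap)
  also have "\<dots> = (\<Sum>k<n. \<Sum>j<n. \<Sum>i<n. Z $$ (k,j) * (A $$ (i,k) * Y $$ (i,j)))"
    by (intro sum.cong refl sum.swap)
  also have "\<dots> = trace_inner n Z (transpose_mat A * Y)"
    unfolding trace_inner_def
  proof (intro sum.cong refl)
    fix k j assume k: "k \<in> {..<n}" and j: "j \<in> {..<n}"
    have "(transpose_mat A * Y) $$ (k,j) = (\<Sum>i<n. A $$ (i,k) * Y $$ (i,j))"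
      using index_mult_mat_sum[of "transpose_mat A" n n Y n k j] A Y k j by simp
    thus "(\<Sum>i<n. Z $$ (k,j) * (A $$ (i,k) * Y $$ (i,j))) = Z $$ (k,j) * (transpose_mat A * Y) $$ (k,j)"
      by (simp add: sum_distrib_left)
  qed
  finally show ?thesis .
qed

lemma trace_inner_transpose:
  assumes X: "X \<in> carrier_mat n n" and Y: "Y \<in> carrier_mat n n"
  shows "trace_inner n (transpose_mat X) (transpose_mat Y) = trace_inner n X Y"
proof -
  have "trace_inner n (transpose_mat X) (transpose_mat Y) = (\<Sum>i<n. \<Sum>j<n. X $$ (j,i) * Y $$ (j,i))"
    unfolding trace_inner_def using X Y by (intro sum.cong refl) simp
  also have "\<dots> = trace_inner n X Y" unfolding trace_inner_def by (rule sum.swap)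
  finally show ?thesis .
qed

lemma trace_inner_mult_right:
  assumes B: "(B::real mat) \<in> carrier_mat n n" and Z: "Z \<in> carrier_mat n n" and Y: "Y \<in> carrier_mat n n"
  shows "trace_inner n (Z * B) Y = trace_inner n Z (Y * transpose_mat B)"
proof -
  have "trace_inner n (Z * B) Y = trace_inner n (transpose_mat (Z * B)) (transpose_mat Y)"
    using trace_inner_transpose[of "Z * B" n Y] B Z Y by simp
  also have "transpose_mat (Z * B) = transpose_mat B * transpose_mat Z"
    using transpose_mult[OF Z B] .
  also have "trace_inner n (transpose_mat B * transpose_mat Z) (transpose_mat Y)
      = trace_inner n (transpose_mat Z) (B * transpose_mat Y)"
    using trace_inner_mult_left[of "transpose_mat B" n "transpose_mat Z" "transpose_mat Y"] B Z Y
    by simp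
  also have "\<dots> = trace_inner n (transpose_mat Z) (transpose_mat (Y * transpose_mat B))"
    using transpose_mult[of Y n n "transpose_mat B" n] Y B by simp
  also have "\<dots> = trace_inner n Z (Y * transpose_mat B)"
    using trace_inner_transpose[of Z n "Y * transpose_mat B"] Z Y B by simp
  finally show ?thesis .
qed

lemma trace_inner_add_right:
  assumes "Y \<in> carrier_mat n n" "Z \<in> carrier_mat n n"
  shows "trace_inner n X (Y + Z) = trace_inner n X Y + trace_inner n X Z"
  unfolding trace_inner_def using assms by (simp add: sum.distrib algebra_simps)

lemma trace_inner_smult_right:
  assumes "Y \<in> carrier_mat n n"
  shows "trace_inner n X (c \<cdot>\<^sub>m Y) = c * trace_inner n X Y"
  unfolding trace_inner_def using assms by (simp add: sum_distrib_left algebra_simps)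

lemma trace_inner_add_left:
  assumes "Y \<in> carrier_mat n n" "Z \<in> carrier_mat n n"
  shows "trace_inner n (Y + Z) X = trace_inner n Y X + trace_inner n Z X"
  using trace_inner_add_right[OF assms, of X] trace_inner_commute by metis

lemma trace_inner_smult_left:
  assumes "Y \<in> carrier_mat n n"
  shows "trace_inner n (c \<cdot>\<^sub>m Y) X = c * trace_inner n Y X"
  using trace_inner_smult_right[OF assms, of X] trace_inner_commute by metis

lemma trace_inner_zero_right[simp]: "trace_inner n X (0\<^sub>m n n) = 0"
  unfolding trace_inner_def by simp

lemma trace_inner_self_nonneg: "trace_inner n X X \<ge> 0"
  unfolding trace_inner_def by (intro sum_nonneg) simp

lemma trace_inner_self_eq_0D:
  assumes X: "X \<in> carrier_mat n n" and z: "trace_inner n X X = 0" shows "X = 0\<^sub>m n n"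
proof -
  have "\<forall>i\<in>{..<n}. (\<Sum>j<n. X $$ (i,j) * X $$ (i,j)) = 0"
    using z unfolding trace_inner_def
    by (subst sum_nonneg_eq_0_iff[symmetric]) (auto intro: sum_nonneg)
  hence "\<forall>i<n. \<forall>j\<in>{..<n}. X $$ (i,j) * X $$ (i,j) = 0"
    by (subst (asm) sum_nonneg_eq_0_iff) auto
  thus ?thesis using X by (intro eq_matI) auto
qed

lemma index_mult_mat_diag_transpose:
  fixes X Y :: "real mat"
  assumes X: "X \<in> carrier_mat n m" and Y: "Y \<in> carrier_mat n m" and i: "i < n" and j: "j < n"
  shows "(X * mat_diag m s * transpose_mat Y) $$ (i,j) = (\<Sum>k<m. X $$ (i,k) * s k * Y $$ (j,k))"
proof -
  have "X * mat_diag m s = mat n m (\<lambda>(i,k). X $$ (i,k) * s k)" by (rule mat_diag_mult_right[OF X])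
  moreover have "(mat n m (\<lambda>(i,k). X $$ (i,k) * s k) * transpose_mat Y) $$ (i,j)
      = (\<Sum>k<m. X $$ (i,k) * s k * Y $$ (j,k))"
  proof -
    have "(mat n m (\<lambda>(i,k). X $$ (i,k) * s k) * transpose_mat Y) $$ (i,j)
        = vec m (\<lambda>k. X $$ (i,k) * s k) \<bullet> row Y j"
      using i j Y by simp
    also have "\<dots> = (\<Sum>k<m. X $$ (i,k) * s k * Y $$ (j,k))"
      unfolding scalar_prod_real_eq_sum by (rule sum.cong) (use Y j in auto)
    finally show ?thesis .
  qed
  ultimately show ?thesis by simp
qed

lemma trace_inner_mat_diag_transpose:
  fixes X Y :: "real mat"
  assumes X: "X \<in> carrier_mat n m" and Y: "Y \<in> carrier_mat n m" and Z: "Z \<in> carrier_mat n n"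
  shows "trace_inner n Z (X * mat_diag m s * transpose_mat Y)
    = (\<Sum>k<m. s k * (col X k \<bullet> (Z *\<^sub>v col Y k)))"
proof -
  have "trace_inner n Z (X * mat_diag m s * transpose_mat Y)
      = (\<Sum>i<n. \<Sum>j<n. Z $$ (i,j) * (\<Sum>k<m. X $$ (i,k) * s k * Y $$ (j,k)))"
    unfolding trace_inner_def using index_mult_mat_diag_transpose[OF X Y] by simp
  also have "\<dots> = (\<Sum>i<n. \<Sum>j<n. \<Sum>k<m. s k * (X $$ (i,k) * (Z $$ (i,j) * Y $$ (j,k))))"
    by (simp add: sum_distrib_left algebra_simps)
  also have "\<dots> = (\<Sum>i<n. \<Sum>k<m. \<Sum>j<n. s k * (X $$ (i,k) * (Z $$ (i,j) * Y $$ (j,k))))"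
    by (rule sum.cong[OF refl], rule sum.swap)
  also have "\<dots> = (\<Sum>k<m. \<Sum>i<n. \<Sum>j<n. s k * (X $$ (i,k) * (Z $$ (i,j) * Y $$ (j,k))))"
    by (rule sum.swap)
  also have "\<dots> = (\<Sum>k<m. s k * (col X k \<bullet> (Z *\<^sub>v col Y k)))"
  proof (rule sum.cong[OF refl])
    fix k assume k: "k \<in> {..<m}"
    have "col X k \<bullet> (Z *\<^sub>v col Y k) = (\<Sum>i<n. X $$ (i,k) * (\<Sum>j<n. Z $$ (i,j) * Y $$ (j,k)))"
      using X Y Z k by (simp add: scalar_prod_real_eq_sum)
    thus "(\<Sum>i<n. \<Sum>j<n. s k * (X $$ (i,k) * (Z $$ (i,j) * Y $$ (j,k))))
        = s k * (col X k \<bullet> (Z *\<^sub>v col Y k))"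
      by (simp add: sum_distrib_left)
  qed
  finally show ?thesis .
qed

section \<open>The nuclear norm as a dual norm\<close>

definition spectral_bounded :: "nat \<Rightarrow> real \<Rightarrow> real mat \<Rightarrow> bool" where
  "spectral_bounded n c Z \<longleftrightarrow>
     Z \<in> carrier_mat n n \<and> (\<forall>v\<in>carrier_vec n. (Z *\<^sub>v v) \<bullet> (Z *\<^sub>v v) \<le> c\<^sup>2 * (v \<bullet> v))"

lemma scalar_prod_col_orthonormal:
  assumes X: "(X::real mat) \<in> carrier_mat n m" and O: "transpose_mat X * X = 1\<^sub>m m" and k: "k < m"
  shows "col X k \<bullet> col X k = 1"
proof -
  have "(transpose_mat X * X) $$ (k,k) = col X k \<bullet> col X k" using X k by simp
  thus ?thesis using O k by simp
qed

lemma trace_inner_le_sum_singular_values: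
  assumes X: "X \<in> carrier_mat n m" and Y: "Y \<in> carrier_mat n m"
    and XO: "transpose_mat X * X = 1\<^sub>m m" and YO: "transpose_mat Y * Y = 1\<^sub>m m"
    and s: "\<forall>k<m. s k \<ge> 0" and Z: "spectral_bounded n c Z" and c: "c \<ge> 0"
  shows "trace_inner n Z (X * mat_diag m s * transpose_mat Y) \<le> c * (\<Sum>k<m. s k)"
proof -
  have Zc: "Z \<in> carrier_mat n n" using Z unfolding spectral_bounded_def by simp
  have trm: "col X k \<bullet> (Z *\<^sub>v col Y k) \<le> c" if k: "k < m" for k
  proof -
    have xc: "col X k \<in> carrier_vec n" and yc: "col Y k \<in> carrier_vec n" using X Y k by auto
    have "col X k \<bullet> (Z *\<^sub>v col Y k) \<le> \<bar>col X k \<bullet> (Z *\<^sub>v col Y k)\<bar>" by simp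
    also have "\<dots> \<le> sqrt (col X k \<bullet> col X k) * sqrt ((Z *\<^sub>v col Y k) \<bullet> (Z *\<^sub>v col Y k))"
      by (rule abs_scalar_prod_le[of _ n]) (use xc yc Zc in auto)
    also have "\<dots> = sqrt ((Z *\<^sub>v col Y k) \<bullet> (Z *\<^sub>v col Y k))"
      using scalar_prod_col_orthonormal[OF X XO k] by simp
    also have "\<dots> \<le> sqrt (c\<^sup>2 * (col Y k \<bullet> col Y k))"
      using Z yc unfolding spectral_bounded_def by (intro real_sqrt_le_mono) blast
    also have "\<dots> = c" using scalar_prod_col_orthonormal[OF Y YO k] c by simp
    finally show ?thesis .
  qed
  have "trace_inner n Z (X * mat_diag m s * transpose_mat Y) = (\<Sum>k<m. s k * (col X k \<bullet> (Z *\<^sub>v col Y k)))"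
    by (rule trace_inner_mat_diag_transpose[OF X Y Zc])
  also have "\<dots> \<le> (\<Sum>k<m. s k * c)"
    by (rule sum_mono) (use trm s in \<open>auto intro: mult_left_mono\<close>)
  also have "\<dots> = c * (\<Sum>k<m. s k)" by (simp add: sum_distrib_left mult.commute)
  finally show ?thesis .
qed

lemma trace_inner_orthogonal_factors:
  assumes X: "X \<in> carrier_mat n m" and Y: "Y \<in> carrier_mat n m"
    and XO: "transpose_mat X * X = 1\<^sub>m m" and YO: "transpose_mat Y * Y = 1\<^sub>m m"
  shows "trace_inner n (X * transpose_mat Y) (X * mat_diag m s * transpose_mat Y) = (\<Sum>k<m. s k)"
proof -
  have XY: "X * transpose_mat Y \<in> carrier_mat n n" using X Y by simp
  have "col X k \<bullet> ((X * transpose_mat Y) *\<^sub>v col Y k) = 1" if k: "k < m" for k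
  proof -
    have "(X * transpose_mat Y) *\<^sub>v col Y k = X *\<^sub>v (transpose_mat Y *\<^sub>v col Y k)"
      using X Y k by simp
    also have "transpose_mat Y *\<^sub>v col Y k = col (transpose_mat Y * Y) k"
      using col_mult2[of "transpose_mat Y" m n Y m k] X Y k by simp
    also have "\<dots> = col (1\<^sub>m m) k" using YO by simp
    also have "X *\<^sub>v col (1\<^sub>m m) k = col (X * 1\<^sub>m m) k"
      using col_mult2[of X n m "1\<^sub>m m" m k] X k by simp
    also have "X * 1\<^sub>m m = X" using X by simp
    finally show ?thesis using scalar_prod_col_orthonormal[OF X XO k] by simp
  qed
  thus ?thesis unfolding trace_inner_mat_diag_transpose[OF X Y XY] by simp
qed

lemma spectral_bounded_orthogonal_mult:
  assumes P: "(P::real mat) \<in> carrier_mat n n" and Q: "Q \<in> carrier_mat n n"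
    and PO: "transpose_mat P * P = 1\<^sub>m n" and QO: "transpose_mat Q * Q = 1\<^sub>m n"
  shows "spectral_bounded n 1 (P * transpose_mat Q)"
  unfolding spectral_bounded_def
proof (intro conjI ballI)
  show "P * transpose_mat Q \<in> carrier_mat n n" using P Q by simp
  fix v :: "real vec" assume v: "v \<in> carrier_vec n"
  have "(P * transpose_mat Q) *\<^sub>v v = P *\<^sub>v (transpose_mat Q *\<^sub>v v)" using P Q v by simp
  moreover have "(P *\<^sub>v (transpose_mat Q *\<^sub>v v)) \<bullet> (P *\<^sub>v (transpose_mat Q *\<^sub>v v))
      = (transpose_mat Q *\<^sub>v v) \<bullet> (transpose_mat Q *\<^sub>v v)"
    by (rule scalar_prod_self_mult_isometry[OF P _ PO]) (use Q v in simp)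
  moreover have "(transpose_mat Q *\<^sub>v v) \<bullet> (transpose_mat Q *\<^sub>v v) = v \<bullet> v"
    by (rule scalar_prod_self_mult_isometry[of _ n n])
      (use Q v orthogonal_mat_right_inverse[OF Q QO] in auto)
  ultimately show "((P * transpose_mat Q) *\<^sub>v v) \<bullet> ((P * transpose_mat Q) *\<^sub>v v) \<le> 1\<^sup>2 * (v \<bullet> v)"
    by simp
qed

definition is_svd :: "nat \<Rightarrow> real mat \<Rightarrow> real mat \<Rightarrow> real mat \<Rightarrow> (nat \<Rightarrow> real) \<Rightarrow> bool" where
  "is_svd n A P Q \<sigma> \<longleftrightarrow> P \<in> carrier_mat n n \<and> Q \<in> carrier_mat n n \<and>
      transpose_mat P * P = 1\<^sub>m n \<and> transpose_mat Q * Q = 1\<^sub>m n \<and>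
      (\<forall>i<n. \<sigma> i \<ge> 0) \<and> A = P * mat_diag n \<sigma> * transpose_mat Q"

lemma is_svd_sum_le:
  assumes "is_svd n A P Q \<sigma>" "is_svd n A P' Q' \<sigma>'"
  shows "(\<Sum>i<n. \<sigma>' i) \<le> (\<Sum>i<n. \<sigma> i)"
proof -
  have c: "spectral_bounded n 1 (P' * transpose_mat Q')"
    using spectral_bounded_orthogonal_mult assms(2) unfolding is_svd_def by blast
  have "(\<Sum>i<n. \<sigma>' i) = trace_inner n (P' * transpose_mat Q') A"
    using trace_inner_orthogonal_factors[of P' n n Q' \<sigma>'] assms(2) unfolding is_svd_def by auto
  also have "\<dots> \<le> 1 * (\<Sum>i<n. \<sigma> i)"
    using trace_inner_le_sum_singular_values[of P n n Q \<sigma> 1 "P' * transpose_mat Q'"] c assms(1)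
      unfolding is_svd_def by auto
  finally show ?thesis by simp
qed

lemma nuclear_norm_eq_sum:
  assumes "is_svd n A P Q \<sigma>" shows "nuclear_norm n A = (\<Sum>i<n. \<sigma> i)"
proof -
  let ?R = "\<lambda>s. \<exists>P Q \<sigma>. P \<in> carrier_mat n n \<and> Q \<in> carrier_mat n n \<and>
      transpose_mat P * P = 1\<^sub>m n \<and> transpose_mat Q * Q = 1\<^sub>m n \<and>
      (\<forall>i<n. \<sigma> i \<ge> 0) \<and> A = P * mat_diag n \<sigma> * transpose_mat Q \<and> s = (\<Sum>i<n. \<sigma> i)"
  have ex: "\<exists>s. ?R s" using assms unfolding is_svd_def by blast
  have "?R (nuclear_norm n A)" unfolding nuclear_norm_def by (rule someI_ex[OF ex])
  then obtain P' Q' \<sigma>' where s': "is_svd n A P' Q' \<sigma>'" "nuclear_norm n A = (\<Sum>i<n. \<sigma>' i)"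
    unfolding is_svd_def by blast
  show ?thesis using is_svd_sum_le[OF assms s'(1)] is_svd_sum_le[OF s'(1) assms] s'(2) by simp
qed

lemma is_svd_exists:
  assumes "A \<in> carrier_mat n n" shows "\<exists>P Q \<sigma>. is_svd n A P Q \<sigma>"
  using svd_exists[OF assms] unfolding is_svd_def by blast

lemma trace_inner_le_nuclear_norm:
  assumes A: "A \<in> carrier_mat n n" and Z: "spectral_bounded n c Z" and c: "c \<ge> 0"
  shows "trace_inner n Z A \<le> c * nuclear_norm n A"
proof -
  obtain P Q \<sigma> where s: "is_svd n A P Q \<sigma>" using is_svd_exists[OF A] by blast
  have "trace_inner n Z A \<le> c * (\<Sum>i<n. \<sigma> i)"
    using trace_inner_le_sum_singular_values[of P n n Q \<sigma> c Z] s Z c unfolding is_svd_def by auto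
  thus ?thesis using nuclear_norm_eq_sum[OF s] by simp
qed

lemma nuclear_norm_nonneg:
  assumes A: "A \<in> carrier_mat n n" shows "nuclear_norm n A \<ge> 0"
proof -
  obtain P Q \<sigma> where s: "is_svd n A P Q \<sigma>" using is_svd_exists[OF A] by blast
  have "(\<Sum>i<n. \<sigma> i) \<ge> 0" using s unfolding is_svd_def by (auto intro: sum_nonneg)
  thus ?thesis using nuclear_norm_eq_sum[OF s] by simp
qed

lemma nuclear_norm_eq_0D:
  assumes A: "A \<in> carrier_mat n n" and z: "nuclear_norm n A = 0" shows "A = 0\<^sub>m n n"
proof -
  obtain P Q \<sigma> where s: "is_svd n A P Q \<sigma>" using is_svd_exists[OF A] by blast
  have "(\<Sum>i<n. \<sigma> i) = 0" using nuclear_norm_eq_sum[OF s] z by simp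
  hence s0: "\<forall>i\<in>{..<n}. \<sigma> i = 0" using s unfolding is_svd_def
    by (subst sum_nonneg_eq_0_iff[symmetric]) auto
  have "mat_diag n \<sigma> = 0\<^sub>m n n" by (rule eq_matI) (use s0 in \<open>auto simp: mat_diag_def\<close>)
  moreover have P: "P \<in> carrier_mat n n" and Q: "Q \<in> carrier_mat n n"
    and Aeq: "A = P * mat_diag n \<sigma> * transpose_mat Q"
    using s unfolding is_svd_def by auto
  moreover have "P * 0\<^sub>m n n = 0\<^sub>m n n" using right_mult_zero_mat[OF P] by simp
  moreover have "0\<^sub>m n n * transpose_mat Q = 0\<^sub>m n n"
    using left_mult_zero_mat[of "transpose_mat Q" n n] Q by simp
  ultimately show ?thesis by simp
qed

section \<open>Projection onto the tangent space\<close>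

definition perp_proj :: "nat \<Rightarrow> real mat \<Rightarrow> real mat" where
  "perp_proj n U = 1\<^sub>m n - U * transpose_mat U"

definition P_T_compl :: "nat \<Rightarrow> real mat \<Rightarrow> real mat \<Rightarrow> real mat \<Rightarrow> real mat" where
  "P_T_compl n U V X = perp_proj n U * X * perp_proj n V"

definition tangent_proj :: "nat \<Rightarrow> real mat \<Rightarrow> real mat \<Rightarrow> real mat \<Rightarrow> real mat" where
  "tangent_proj n U V X = X - P_T_compl n U V X"

lemma mult_transpose_carrier[simp]: "U \<in> carrier_mat n r \<Longrightarrow> U * transpose_mat U \<in> carrier_mat n n"
  by (rule mult_carrier_mat[of _ n r]) simp_all

lemma perp_proj_carrier[simp]: "U \<in> carrier_mat n r \<Longrightarrow> perp_proj n U \<in> carrier_mat n n"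
  unfolding perp_proj_def by (rule minus_carrier_mat) simp

lemma P_T_compl_carrier[simp]:
  "U \<in> carrier_mat n r \<Longrightarrow> V \<in> carrier_mat n r' \<Longrightarrow> X \<in> carrier_mat n n \<Longrightarrow>
    P_T_compl n U V X \<in> carrier_mat n n"
  unfolding P_T_compl_def by (meson perp_proj_carrier mult_carrier_mat)

lemma tangent_proj_carrier[simp]:
  "U \<in> carrier_mat n r \<Longrightarrow> V \<in> carrier_mat n r' \<Longrightarrow> X \<in> carrier_mat n n \<Longrightarrow>
    tangent_proj n U V X \<in> carrier_mat n n"
  unfolding tangent_proj_def by (rule minus_carrier_mat) (rule P_T_compl_carrier)

lemma perp_proj_mult_self:
  assumes U: "U \<in> carrier_mat n r" and O: "transpose_mat U * U = 1\<^sub>m r"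
  shows "perp_proj n U * U = 0\<^sub>m n r"
proof -
  have "perp_proj n U * U = 1\<^sub>m n * U - (U * transpose_mat U) * U"
    unfolding perp_proj_def
    by (rule minus_mult_distrib_mat[of "1\<^sub>m n" n n "U * transpose_mat U" U r]) (use U in auto)
  also have "(U * transpose_mat U) * U = U * (transpose_mat U * U)" using U
    by (simp add: assoc_mult_mat)
  also have "\<dots> = U" using O U by simp
  finally show ?thesis using U by simp
qed

lemma transpose_perp_proj:
  assumes U: "U \<in> carrier_mat n r" shows "transpose_mat (perp_proj n U) = perp_proj n U"
proof -
  have "transpose_mat (1\<^sub>m n - U * transpose_mat U)
      = transpose_mat (1\<^sub>m n) - transpose_mat (U * transpose_mat U)"
    by (rule transpose_minus[of "1\<^sub>m n" n n "U * transpose_mat U"]) (use U in simp_all)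
  also have "transpose_mat (U * transpose_mat U) = U * transpose_mat U"
    using transpose_mult[of U n r "transpose_mat U" n] U by simp
  finally show ?thesis unfolding perp_proj_def by simp
qed

lemma transpose_mult_perp_proj:
  assumes U: "U \<in> carrier_mat n r" and O: "transpose_mat U * U = 1\<^sub>m r"
  shows "transpose_mat U * perp_proj n U = 0\<^sub>m r n"
proof -
  have "transpose_mat U * perp_proj n U
      = transpose_mat (transpose_mat (perp_proj n U) * U)"
    using U transpose_mult[of "transpose_mat (perp_proj n U)" n n U r] by simp
  also have "\<dots> = 0\<^sub>m r n" using transpose_perp_proj[OF U] perp_proj_mult_self[OF U O]
    by simp
  finally show ?thesis .
qed

lemma trace_inner_P_T_compl_adjoint:
  assumes U: "U \<in> carrier_mat n r" and V: "V \<in> carrier_mat n r'"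
    and X: "X \<in> carrier_mat n n" and Y: "Y \<in> carrier_mat n n"
  shows "trace_inner n (P_T_compl n U V X) Y = trace_inner n X (P_T_compl n U V Y)"
proof -
  have E: "perp_proj n U \<in> carrier_mat n n" and G: "perp_proj n V \<in> carrier_mat n n"
    using U V by auto
  have "trace_inner n (P_T_compl n U V X) Y
      = trace_inner n (perp_proj n U * X) (Y * transpose_mat (perp_proj n V))"
    unfolding P_T_compl_def by (rule trace_inner_mult_right) (use E G X Y in auto)
  also have "\<dots>
      = trace_inner n X (transpose_mat (perp_proj n U) * (Y * transpose_mat (perp_proj n V)))"
    by (rule trace_inner_mult_left) (use E G X Y in auto)
  also have "transpose_mat (perp_proj n U) * (Y * transpose_mat (perp_proj n V))
      = P_T_compl n U V Y"
    unfolding P_T_compl_def transpose_perp_proj[OF U] transpose_perp_proj[OF V]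
      using E G Y by (simp add: assoc_mult_mat)
  finally show ?thesis .
qed

lemma P_T_compl_eq_0_on_tangent_space:
  assumes U: "U \<in> carrier_mat n r" and V: "V \<in> carrier_mat n r"
    and UO: "transpose_mat U * U = 1\<^sub>m r" and VO: "transpose_mat V * V = 1\<^sub>m r"
    and Z: "Z \<in> tangent_space n r U V"
  shows "P_T_compl n U V Z = 0\<^sub>m n n"
proof -
  obtain A B where A: "A \<in> carrier_mat n r" and B: "B \<in> carrier_mat n r"
    and Zd: "Z = U * transpose_mat A + B * transpose_mat V"
    using Z unfolding tangent_space_def by blast
  have E: "perp_proj n U \<in> carrier_mat n n" and G: "perp_proj n V \<in> carrier_mat n n"
    using U V by auto
  have "perp_proj n U * Z
      = perp_proj n U * (U * transpose_mat A) + perp_proj n U * (B * transpose_mat V)"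
    unfolding Zd
    by (rule mult_add_distrib_mat[of "perp_proj n U" n n "U * transpose_mat A" n "B * transpose_mat V"])
        (use E U A B V in auto)
  also have "perp_proj n U * (U * transpose_mat A) = (perp_proj n U * U) * transpose_mat A"
    by (rule sym, rule assoc_mult_mat[of _ n n _ r _ n]) (use E U A in auto)
  also have "\<dots> = 0\<^sub>m n n" using perp_proj_mult_self[OF U UO] A by simp
  also have "perp_proj n U * (B * transpose_mat V) = (perp_proj n U * B) * transpose_mat V"
    by (rule sym, rule assoc_mult_mat[of _ n n _ r _ n]) (use E B V in auto)
  finally have EZ: "perp_proj n U * Z = perp_proj n U * B * transpose_mat V"
    using E B V
    by (metis left_add_zero_mat mult_carrier_mat transpose_carrier_mat)
  have "P_T_compl n U V Z = perp_proj n U * B * (transpose_mat V * perp_proj n V)"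
    unfolding P_T_compl_def EZ by (rule assoc_mult_mat[of _ n r _ n _ n]) (use E B V G in auto)
  also have "\<dots> = 0\<^sub>m n n" using transpose_mult_perp_proj[OF V VO] E B by simp
  finally show ?thesis .
qed

lemma mult_mat_transpose_in_tangent_space:
  assumes U: "U \<in> carrier_mat n r" and V: "V \<in> carrier_mat n r" and S: "S \<in> carrier_mat r r"
  shows "U * S * transpose_mat V \<in> tangent_space n r U V"
proof -
  have "U * S * transpose_mat V = U * transpose_mat (V * transpose_mat S) + 0\<^sub>m n r * transpose_mat V"
  proof -
    have "transpose_mat (V * transpose_mat S) = S * transpose_mat V"
      using transpose_mult[of V n r "transpose_mat S" r] V S by simp
    thus ?thesis using U V S by (simp add: assoc_mult_mat)
  qed
  moreover have "V * transpose_mat S \<in> carrier_mat n r" using V S by simp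
  moreover have "(0\<^sub>m n r :: real mat) \<in> carrier_mat n r" by simp
  ultimately show ?thesis unfolding tangent_space_def by blast
qed

lemma tangent_proj_in_tangent_space:
  assumes U: "U \<in> carrier_mat n r" and V: "V \<in> carrier_mat n r"
    and X: "X \<in> carrier_mat n n"
  shows "tangent_proj n U V X \<in> tangent_space n r U V"
proof -
  have E: "perp_proj n U \<in> carrier_mat n n" and G: "perp_proj n V \<in> carrier_mat n n"
    using U V by auto
  have UUX: "U * transpose_mat U * X \<in> carrier_mat n n" using U X by simp
  have EX: "perp_proj n U * X = X - U * transpose_mat U * X"
    unfolding perp_proj_def by (subst minus_mult_distrib_mat) (use U X in auto)
  have EXc: "perp_proj n U * X \<in> carrier_mat n n" using E X by simp
  have VV: "V * transpose_mat V \<in> carrier_mat n n" using V by simp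
  have EXG: "perp_proj n U * X * perp_proj n V
      = perp_proj n U * X - perp_proj n U * X * (V * transpose_mat V)"
    unfolding perp_proj_def[of n V]
    by (subst mult_minus_distrib_mat[OF EXc one_carrier_mat VV])
        (use EXc right_mult_one_mat[OF EXc] in simp)
  have EXGc: "perp_proj n U * X * (V * transpose_mat V) \<in> carrier_mat n n" using EXc VV
    by simp
  have gen: "M1 \<in> carrier_mat n n
      \<Longrightarrow> M2 \<in> carrier_mat n n \<Longrightarrow> X - ((X - M1) - M2) = M1 + M2" for M1 M2 :: "real mat"
    by (rule eq_matI) (use X in auto)
  have "tangent_proj n U V X
      = X - ((X - U * transpose_mat U * X) - perp_proj n U * X * (V * transpose_mat V))"
    unfolding tangent_proj_def P_T_compl_def EXG by (subst (1) EX) (rule refl)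
  also have "\<dots> = U * transpose_mat U * X + perp_proj n U * X * (V * transpose_mat V)"
    by (rule gen[OF UUX EXGc])
  also have "U * transpose_mat U * X = U * transpose_mat (transpose_mat X * U)"
  proof -
    have "transpose_mat (transpose_mat X * U) = transpose_mat U * X"
      using transpose_mult[of "transpose_mat X" n n U r] U X by simp
    thus ?thesis using U X by (simp add: assoc_mult_mat)
  qed
  also have "perp_proj n U * X * (V * transpose_mat V)
      = (perp_proj n U * X * V) * transpose_mat V"
    using assoc_mult_mat[of "perp_proj n U * X" n n V r "transpose_mat V" n] EXc V by simp
  finally have "tangent_proj n U V X
      = U * transpose_mat (transpose_mat X * U) + (perp_proj n U * X * V) * transpose_mat V" .
  moreover have "transpose_mat X * U \<in> carrier_mat n r" using U X by simp
  moreover have "perp_proj n U * X * V \<in> carrier_mat n r" using EXc V by simp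
  ultimately show ?thesis unfolding tangent_space_def by blast
qed

lemma tangent_proj_add_P_T_compl:
  assumes U: "U \<in> carrier_mat n r" and V: "V \<in> carrier_mat n r'" and X: "X \<in> carrier_mat n n"
  shows "X = tangent_proj n U V X + P_T_compl n U V X"
proof -
  have "P_T_compl n U V X \<in> carrier_mat n n" using U V X by (rule P_T_compl_carrier)
  thus ?thesis unfolding tangent_proj_def by (intro eq_matI) (use X in auto)
qed

lemma P_T_compl_minus:
  assumes U: "U \<in> carrier_mat n r" and V: "V \<in> carrier_mat n r'"
    and X: "X \<in> carrier_mat n n" and Y: "Y \<in> carrier_mat n n"
  shows "P_T_compl n U V (X - Y) = P_T_compl n U V X - P_T_compl n U V Y"
proof -
  have E: "perp_proj n U \<in> carrier_mat n n" and G: "perp_proj n V \<in> carrier_mat n n"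
    using U V by auto
  have "perp_proj n U * (X - Y) = perp_proj n U * X - perp_proj n U * Y"
    by (rule mult_minus_distrib_mat) (use E X Y in auto)
  moreover have "(perp_proj n U * X - perp_proj n U * Y) * perp_proj n V
      = perp_proj n U * X * perp_proj n V - perp_proj n U * Y * perp_proj n V"
    by (rule minus_mult_distrib_mat) (use E X Y G in auto)
  ultimately show ?thesis unfolding P_T_compl_def by simp
qed

lemma P_T_compl_smult:
  assumes U: "U \<in> carrier_mat n r" and V: "V \<in> carrier_mat n r'" and X: "X \<in> carrier_mat n n"
  shows "P_T_compl n U V (c \<cdot>\<^sub>m X) = c \<cdot>\<^sub>m P_T_compl n U V X"
proof -
  have E: "perp_proj n U \<in> carrier_mat n n" and G: "perp_proj n V \<in> carrier_mat n n"
    using U V by auto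
  have "perp_proj n U * (c \<cdot>\<^sub>m X) = c \<cdot>\<^sub>m (perp_proj n U * X)"
    by (rule mult_smult_distrib[OF E X])
  moreover have "(c \<cdot>\<^sub>m (perp_proj n U * X)) * perp_proj n V
      = c \<cdot>\<^sub>m (perp_proj n U * X * perp_proj n V)"
    by (rule mult_smult_assoc_mat) (use E X G in auto)
  ultimately show ?thesis unfolding P_T_compl_def by simp
qed

lemma tangent_proj_smult:
  assumes U: "U \<in> carrier_mat n r" and V: "V \<in> carrier_mat n r'" and X: "X \<in> carrier_mat n n"
  shows "tangent_proj n U V (c \<cdot>\<^sub>m X) = c \<cdot>\<^sub>m tangent_proj n U V X"
proof -
  have "P_T_compl n U V X \<in> carrier_mat n n" using U V X by (rule P_T_compl_carrier)
  thus ?thesis unfolding tangent_proj_def P_T_compl_smult[OF assms]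
    by (intro eq_matI) (use X in \<open>auto simp: algebra_simps\<close>)
qed

lemma trace_inner_P_T_compl_tangent_space:
  assumes U: "U \<in> carrier_mat n r" and V: "V \<in> carrier_mat n r"
    and UO: "transpose_mat U * U = 1\<^sub>m r" and VO: "transpose_mat V * V = 1\<^sub>m r"
    and X: "X \<in> carrier_mat n n" and Z: "Z \<in> tangent_space n r U V"
  shows "trace_inner n (P_T_compl n U V X) Z = 0"
proof -
  have Zc: "Z \<in> carrier_mat n n" using Z U V unfolding tangent_space_def by auto
  show ?thesis
    using trace_inner_P_T_compl_adjoint[OF U V X Zc] P_T_compl_eq_0_on_tangent_space[OF U V UO VO Z]
    by simp
qed

lemma P_T_eq_tangent_proj:
  assumes U: "U \<in> carrier_mat n r" and V: "V \<in> carrier_mat n r"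
    and UO: "transpose_mat U * U = 1\<^sub>m r" and VO: "transpose_mat V * V = 1\<^sub>m r"
    and X: "X \<in> carrier_mat n n"
  shows "P_T n r U V X = tangent_proj n U V X"
  unfolding P_T_def orth_proj_def
proof (rule the_equality)
  have "X - tangent_proj n U V X = P_T_compl n U V X" unfolding tangent_proj_def
    by (rule eq_matI) (use U V X in auto)
  then show "tangent_proj n U V X \<in> tangent_space n r U V \<and>
      (\<forall>Z\<in>tangent_space n r U V. trace_inner n (X - tangent_proj n U V X) Z = 0)"
    using tangent_proj_in_tangent_space[OF U V X] trace_inner_P_T_compl_tangent_space[OF U V UO VO X]
    by simp
next
  fix Y assume Y: "Y \<in> tangent_space n r U V \<and> (\<forall>Z\<in>tangent_space n r U V. trace_inner n (X - Y) Z = 0)"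
  have Yc: "Y \<in> carrier_mat n n" using Y U V unfolding tangent_space_def by auto
  define D where "D = X - Y"
  have D: "D \<in> carrier_mat n n" unfolding D_def using Yc by (rule minus_carrier_mat)
  have TD: "tangent_proj n U V D \<in> tangent_space n r U V"
    by (rule tangent_proj_in_tangent_space[OF U V D])
  have "trace_inner n (tangent_proj n U V D) (tangent_proj n U V D)
      = trace_inner n D (tangent_proj n U V D)"
    using trace_inner_add_left[of "tangent_proj n U V D" n "P_T_compl n U V D" "tangent_proj n U V D"]
      tangent_proj_add_P_T_compl[OF U V D] trace_inner_P_T_compl_tangent_space[OF U V UO VO D TD] U V D
    by simp
  also have "\<dots> = 0" using Y TD unfolding D_def by blast
  finally have "tangent_proj n U V D = 0\<^sub>m n n" using trace_inner_self_eq_0D U V D by simp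
  moreover have "P_T_compl n U V D = P_T_compl n U V X"
    using P_T_compl_minus[OF U V X Yc] P_T_compl_eq_0_on_tangent_space[OF U V UO VO] Y
      P_T_compl_carrier[OF U V X] unfolding D_def by (auto intro!: eq_matI)
  ultimately have "(X - Y - P_T_compl n U V X) $$ (i,j) = 0" if "i < n" "j < n" for i j
    using that unfolding tangent_proj_def D_def by simp
  then show "Y = tangent_proj n U V X"
    using Yc X P_T_compl_carrier[OF U V X] unfolding tangent_proj_def
    by (intro eq_matI) (auto simp: algebra_simps)
qed

lemma P_T_compl_eq_self_if_P_T_zero:
  assumes U: "U \<in> carrier_mat n r" and V: "V \<in> carrier_mat n r"
    and UO: "transpose_mat U * U = 1\<^sub>m r" and VO: "transpose_mat V * V = 1\<^sub>m r"
    and X: "X \<in> carrier_mat n n" and "P_T n r U V X = 0\<^sub>m n n"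
  shows "P_T_compl n U V X = X"
proof -
  have "X = tangent_proj n U V X + P_T_compl n U V X" by (rule tangent_proj_add_P_T_compl[OF U V X])
  then show ?thesis using assms(6) P_T_eq_tangent_proj[OF U V UO VO X] U V X by simp
qed

lemma perp_proj_idem:
  assumes U: "U \<in> carrier_mat n r" and O: "transpose_mat U * U = 1\<^sub>m r"
  shows "perp_proj n U * perp_proj n U = perp_proj n U"
proof -
  have E: "perp_proj n U \<in> carrier_mat n n" using U by simp
  have a: "perp_proj n U * perp_proj n U
      = 1\<^sub>m n * perp_proj n U - (U * transpose_mat U) * perp_proj n U"
    by (subst (1) perp_proj_def) (rule minus_mult_distrib_mat[of _ n n _ _ n], use U E in auto)
  have b: "(U * transpose_mat U) * perp_proj n U = 0\<^sub>m n n"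
  proof -
    have "(U * transpose_mat U) * perp_proj n U = U * (transpose_mat U * perp_proj n U)"
      by (rule assoc_mult_mat[of _ n r _ n _ n]) (use U E in auto)
    thus ?thesis using transpose_mult_perp_proj[OF U O] U by simp
  qed
  have c: "1\<^sub>m n * perp_proj n U - 0\<^sub>m n n = perp_proj n U"
    by (rule eq_matI) (use E in auto)
  show ?thesis by (simp only: a b c)
qed

lemma scalar_prod_self_perp_proj:
  assumes U: "U \<in> carrier_mat n r" and O: "transpose_mat U * U = 1\<^sub>m r" and y: "y \<in> carrier_vec n"
  shows "(perp_proj n U *\<^sub>v y) \<bullet> (perp_proj n U *\<^sub>v y)
      = y \<bullet> y - (transpose_mat U *\<^sub>v y) \<bullet> (transpose_mat U *\<^sub>v y)"
proof -
  have E: "perp_proj n U \<in> carrier_mat n n" using U by simp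
  have e1: "(perp_proj n U *\<^sub>v y) \<bullet> (perp_proj n U *\<^sub>v y)
      = y \<bullet> ((transpose_mat (perp_proj n U) * perp_proj n U) *\<^sub>v y)"
    by (rule scalar_prod_self_mult_mat_vec[OF E y])
  have e2: "transpose_mat (perp_proj n U) * perp_proj n U = perp_proj n U"
    using transpose_perp_proj[OF U] perp_proj_idem[OF U O] by simp
  have e3: "perp_proj n U *\<^sub>v y = y - (U * transpose_mat U) *\<^sub>v y"
    unfolding perp_proj_def by (subst minus_mult_distrib_mat_vec[of _ n n]) (use U y in auto)
  have e4: "y \<bullet> (y - (U * transpose_mat U) *\<^sub>v y) = y \<bullet> y - y \<bullet> ((U * transpose_mat U) *\<^sub>v y)"
    by (rule scalar_prod_minus_distrib) (use U y in auto)
  have e5: "(U * transpose_mat U) *\<^sub>v y = U *\<^sub>v (transpose_mat U *\<^sub>v y)" using U y by simp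
  have e6: "y \<bullet> (U *\<^sub>v (transpose_mat U *\<^sub>v y)) = (transpose_mat U *\<^sub>v y) \<bullet> (transpose_mat U *\<^sub>v y)"
    by (rule scalar_prod_mult_mat_vec_right[OF U]) (use U y in auto)
  have "(perp_proj n U *\<^sub>v y) \<bullet> (perp_proj n U *\<^sub>v y) = y \<bullet> (perp_proj n U *\<^sub>v y)"
    using e1 e2 by simp
  also have "\<dots> = y \<bullet> (y - (U * transpose_mat U) *\<^sub>v y)" by (simp only: e3)
  finally show ?thesis using e4 e5 e6 by simp
qed

lemma scalar_prod_self_add_perp_proj:
  assumes U: "U \<in> carrier_mat n r" and UO: "transpose_mat U * U = 1\<^sub>m r"
    and a: "a \<in> carrier_vec r" and y: "y \<in> carrier_vec n"
  shows "(U *\<^sub>v a + perp_proj n U *\<^sub>v y) \<bullet> (U *\<^sub>v a + perp_proj n U *\<^sub>v y)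
    = a \<bullet> a + (perp_proj n U *\<^sub>v y) \<bullet> (perp_proj n U *\<^sub>v y)"
proof -
  have E: "perp_proj n U \<in> carrier_mat n n" using U by simp
  have Ua: "U *\<^sub>v a \<in> carrier_vec n" and Ey: "perp_proj n U *\<^sub>v y \<in> carrier_vec n"
    using U a mult_mat_vec_carrier[OF E y] by auto
  have "(perp_proj n U *\<^sub>v y) \<bullet> (U *\<^sub>v a) = (transpose_mat U *\<^sub>v (perp_proj n U *\<^sub>v y)) \<bullet> a"
    by (rule scalar_prod_mult_mat_vec_right[OF U a Ey])
  also have "transpose_mat U *\<^sub>v (perp_proj n U *\<^sub>v y)
      = (transpose_mat U * perp_proj n U) *\<^sub>v y"
    by (rule assoc_mult_mat_vec[symmetric, of _ r n _ n]) (use U E y in auto)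
  also have "\<dots> = 0\<^sub>v r" using transpose_mult_perp_proj[OF U UO] zero_mat_mult_vec[OF y]
    by simp
  finally have "(U *\<^sub>v a) \<bullet> (perp_proj n U *\<^sub>v y) = 0" using a comm_scalar_prod[OF Ua Ey]
    by simp
  then show ?thesis
    using scalar_prod_self_add_smult[OF Ua Ey, of 1] scalar_prod_self_mult_isometry[OF U a UO] Ey
    by simp
qed

text \<open>\<open>U V\<^sup>T\<close> maps the column space of \<open>V\<close> isometrically onto that of \<open>U\<close>, while
  \<open>P\<^sub>T\<^sub>\<bottom> Z\<close> maps the orthogonal complement of the former into that of the latter.\<close>
lemma spectral_bounded_add_P_T_compl:
  assumes U: "U \<in> carrier_mat n r" and V: "V \<in> carrier_mat n r"
    and UO: "transpose_mat U * U = 1\<^sub>m r" and VO: "transpose_mat V * V = 1\<^sub>m r"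
    and Z: "spectral_bounded n 1 Z"
  shows "spectral_bounded n 1 (U * transpose_mat V + P_T_compl n U V Z)" (is "spectral_bounded n 1 ?M")
  unfolding spectral_bounded_def
proof (intro conjI ballI)
  have Zc: "Z \<in> carrier_mat n n" using Z unfolding spectral_bounded_def by simp
  have E: "perp_proj n U \<in> carrier_mat n n" and G: "perp_proj n V \<in> carrier_mat n n"
    using U V by auto
  show "?M \<in> carrier_mat n n" using U V Zc by simp
  fix v :: "real vec" assume v: "v \<in> carrier_vec n"
  define a where "a = transpose_mat V *\<^sub>v v"
  define y where "y = Z *\<^sub>v (perp_proj n V *\<^sub>v v)"
  have a: "a \<in> carrier_vec r" and y: "y \<in> carrier_vec n"
    unfolding a_def y_def using V v mult_mat_vec_carrier[OF Zc mult_mat_vec_carrier[OF G v]] by auto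
  have "(perp_proj n U * Z * perp_proj n V) *\<^sub>v v = perp_proj n U *\<^sub>v y"
    unfolding y_def using E Zc G v
    by (simp add: assoc_mult_mat_vec[of _ n n _ n] mult_mat_vec_carrier[OF G v])
  moreover have "?M *\<^sub>v v = (U * transpose_mat V) *\<^sub>v v + (perp_proj n U * Z * perp_proj n V) *\<^sub>v v"
    unfolding P_T_compl_def
    by (rule add_mult_distrib_mat_vec)
      (use U V v P_T_compl_carrier[OF U V Zc, unfolded P_T_compl_def] in auto)
  ultimately have "?M *\<^sub>v v = U *\<^sub>v a + perp_proj n U *\<^sub>v y"
    unfolding a_def using U V v by simp
  then have "(?M *\<^sub>v v) \<bullet> (?M *\<^sub>v v) = a \<bullet> a + (perp_proj n U *\<^sub>v y) \<bullet> (perp_proj n U *\<^sub>v y)"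
    using scalar_prod_self_add_perp_proj[OF U UO a y] by simp
  also have "(perp_proj n U *\<^sub>v y) \<bullet> (perp_proj n U *\<^sub>v y) \<le> y \<bullet> y"
    using scalar_prod_self_perp_proj[OF U UO y] scalar_prod_self_nonneg[of "transpose_mat U *\<^sub>v y"]
    by linarith
  also have "y \<bullet> y \<le> (perp_proj n V *\<^sub>v v) \<bullet> (perp_proj n V *\<^sub>v v)"
    using Z G v unfolding spectral_bounded_def y_def by simp
  also have "\<dots> = v \<bullet> v - a \<bullet> a" unfolding a_def using scalar_prod_self_perp_proj[OF V VO v] .
  finally show "(?M *\<^sub>v v) \<bullet> (?M *\<^sub>v v) \<le> 1\<^sup>2 * (v \<bullet> v)" by simp
qed

lemma vec_norm_smult: "vec_norm (c \<cdot>\<^sub>v v) = \<bar>c\<bar> * vec_norm v"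
proof -
  have "(c \<cdot>\<^sub>v v) \<bullet> (c \<cdot>\<^sub>v v) = c\<^sup>2 * (v \<bullet> v)"
    by (simp add: power2_eq_square smult_scalar_prod_distrib[of v "dim_vec v" v]
        scalar_prod_smult_distrib[of v "dim_vec v"])
  thus ?thesis unfolding vec_norm_def by (simp add: real_sqrt_mult)
qed

lemma scalar_prod_self_mult_mat_vec_le:
  assumes W: "(W::real mat) \<in> carrier_mat n n" and v: "v \<in> carrier_vec n"
  shows "(W *\<^sub>v v) \<bullet> (W *\<^sub>v v) \<le> (\<Sum>i<n. row W i \<bullet> row W i) * (v \<bullet> v)"
proof -
  have "(W *\<^sub>v v) \<bullet> (W *\<^sub>v v) = (\<Sum>i<n. (row W i \<bullet> v)\<^sup>2)"
    using W scalar_prod_self_eq_sum_squares[of "W *\<^sub>v v"] by simp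
  also have "\<dots> \<le> (\<Sum>i<n. (row W i \<bullet> row W i) * (v \<bullet> v))"
    by (rule sum_mono, rule Cauchy_Schwarz_scalar_prod[of _ n]) (use W v in auto)
  also have "\<dots> = (\<Sum>i<n. row W i \<bullet> row W i) * (v \<bullet> v)" by (simp add: sum_distrib_right)
  finally show ?thesis .
qed

lemma bdd_above_spec_norm_set:
  assumes W: "(W::real mat) \<in> carrier_mat n n"
  shows "bdd_above {vec_norm (W *\<^sub>v v) | v. v \<in> carrier_vec n \<and> vec_norm v \<le> 1}"
proof (rule bdd_aboveI)
  define K where "K = (\<Sum>i<n. row W i \<bullet> row W i)"
  have K0: "K \<ge> 0" unfolding K_def by (intro sum_nonneg) simp
  fix x assume "x \<in> {vec_norm (W *\<^sub>v v) | v. v \<in> carrier_vec n \<and> vec_norm v \<le> 1}"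
  then obtain v where v: "v \<in> carrier_vec n" "vec_norm v \<le> 1" and x: "x = vec_norm (W *\<^sub>v v)"
    by blast
  have "v \<bullet> v \<le> 1" using v(2) unfolding vec_norm_def by (simp add: real_sqrt_le_1_iff)
  hence "(W *\<^sub>v v) \<bullet> (W *\<^sub>v v) \<le> K" using scalar_prod_self_mult_mat_vec_le[OF W v(1)] K0
    unfolding K_def[symmetric]
    by (meson mult_left_le order_trans scalar_prod_self_nonneg)
  thus "x \<le> sqrt K" unfolding x vec_norm_def by simp
qed

lemma spec_norm_nonneg:
  assumes W: "(W::real mat) \<in> carrier_mat n n" shows "spec_norm n W \<ge> 0"
proof -
  have "vec_norm (W *\<^sub>v 0\<^sub>v n) = 0" using mult_mat_vec_zero_vec[OF W] by (simp add: vec_norm_def)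
  then show ?thesis unfolding spec_norm_def
    by (intro cSup_upper[OF _ bdd_above_spec_norm_set[OF W]]) (force simp: vec_norm_def)
qed

lemma spec_norm_mult_vec_le:
  assumes W: "(W::real mat) \<in> carrier_mat n n" and v: "v \<in> carrier_vec n"
  shows "vec_norm (W *\<^sub>v v) \<le> spec_norm n W * vec_norm v"
proof (cases "v = 0\<^sub>v n")
  case True
  thus ?thesis using mult_mat_vec_zero_vec[OF W] unfolding vec_norm_def by simp
next
  case False
  hence pos: "vec_norm v > 0" using scalar_prod_self_pos[OF v] unfolding vec_norm_def by simp
  define c where "c = 1 / vec_norm v"
  have "vec_norm (c \<cdot>\<^sub>v v) = 1" unfolding vec_norm_smult c_def using pos by simp
  hence "vec_norm (W *\<^sub>v (c \<cdot>\<^sub>v v)) \<le> spec_norm n W" unfolding spec_norm_def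
    by (intro cSup_upper[OF _ bdd_above_spec_norm_set[OF W]]) (use v in auto)
  moreover have "W *\<^sub>v (c \<cdot>\<^sub>v v) = c \<cdot>\<^sub>v (W *\<^sub>v v)" using W v by (simp add: mult_mat_vec)
  ultimately have "c * vec_norm (W *\<^sub>v v) \<le> spec_norm n W" using pos
    by (simp add: vec_norm_smult c_def)
  thus ?thesis using pos unfolding c_def by (simp add: field_simps)
qed

lemma spectral_bounded_spec_norm:
  assumes W: "(W::real mat) \<in> carrier_mat n n" shows "spectral_bounded n (spec_norm n W) W"
  unfolding spectral_bounded_def
proof (intro conjI ballI W)
  fix v :: "real vec" assume v: "v \<in> carrier_vec n"
  have "(vec_norm (W *\<^sub>v v))\<^sup>2 \<le> (spec_norm n W * vec_norm v)\<^sup>2"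
    by (rule power_mono[OF spec_norm_mult_vec_le[OF W v]]) (simp add: vec_norm_def)
  thus "(W *\<^sub>v v) \<bullet> (W *\<^sub>v v) \<le> (spec_norm n W)\<^sup>2 * (v \<bullet> v)"
    unfolding vec_norm_def by (simp add: power_mult_distrib)
qed

lemma trace_inner_le_spec_norm_nuclear_norm:
  assumes "W \<in> carrier_mat n n" "H \<in> carrier_mat n n"
  shows "trace_inner n W H \<le> spec_norm n W * nuclear_norm n H"
  using trace_inner_le_nuclear_norm[OF assms(2) spectral_bounded_spec_norm[OF assms(1)]
      spec_norm_nonneg[OF assms(1)]] .

lemma abs_index_le_max_norm: assumes "i < n" "j < n" shows "\<bar>F $$ (i,j)\<bar> \<le> max_norm n F"
proof -
  have fin: "finite {\<bar>F $$ (i,j)\<bar> | i j. i < n \<and> j < n}"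
  proof -
    have "{\<bar>F $$ (i,j)\<bar> | i j. i < n \<and> j < n} = (\<lambda>(i,j). \<bar>F $$ (i,j)\<bar>) ` ({..<n} \<times> {..<n})" by auto
    thus ?thesis by simp
  qed
  show ?thesis unfolding max_norm_def by (rule Max_ge) (use fin assms in auto)
qed

lemma trace_inner_P_Omega_self_le: "trace_inner n (P_Omega n \<Omega> Y) (P_Omega n \<Omega> Y) \<le> trace_inner n Y Y"
  unfolding trace_inner_def P_Omega_def by (intro sum_mono) auto

lemma trace_inner_tangent_proj_self_le: assumes U: "U \<in> carrier_mat n r" and V: "V \<in> carrier_mat n r"
  and UO: "transpose_mat U * U = 1\<^sub>m r" and VO: "transpose_mat V * V = 1\<^sub>m r"
  and X: "X \<in> carrier_mat n n"
  shows "trace_inner n (tangent_proj n U V X) (tangent_proj n U V X) \<le> trace_inner n X X"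
proof -
  define Y Y' where "Y = tangent_proj n U V X" and "Y' = P_T_compl n U V X"
  have Y: "Y \<in> carrier_mat n n" and Y': "Y' \<in> carrier_mat n n"
    unfolding Y_def Y'_def using U V X by auto
  have "trace_inner n Y' Y = 0" unfolding Y_def Y'_def
    by (rule trace_inner_P_T_compl_tangent_space[OF U V UO VO X tangent_proj_in_tangent_space[OF U V X]])
  moreover have "trace_inner n X X = trace_inner n (Y + Y') (Y + Y')"
    using tangent_proj_add_P_T_compl[OF U V X] unfolding Y_def Y'_def by simp
  ultimately have "trace_inner n X X = trace_inner n Y Y + trace_inner n Y' Y'"
    by (simp add: trace_inner_add_left[OF Y Y'] trace_inner_add_right[OF Y Y']
        trace_inner_commute[of n Y Y'])
  then show ?thesis using trace_inner_self_nonneg[of n Y'] unfolding Y_def by simp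
qed

lemma frob_norm_smult:
  assumes "X \<in> carrier_mat n n" shows "frob_norm n (c \<cdot>\<^sub>m X) = \<bar>c\<bar> * frob_norm n X"
proof -
  have "trace_inner n (c \<cdot>\<^sub>m X) (c \<cdot>\<^sub>m X) = c\<^sup>2 * trace_inner n X X"
    using trace_inner_smult_left[where Y = X and c = c and X = "c \<cdot>\<^sub>m X"]
      trace_inner_smult_right[where Y = X and c = c and X = X] assms
    by (simp add: power2_eq_square)
  then show ?thesis unfolding frob_norm_def by (simp add: real_sqrt_mult)
qed

lemma P_Omega_smult:
  "X \<in> carrier_mat n n \<Longrightarrow> P_Omega n \<Omega> (c \<cdot>\<^sub>m X) = c \<cdot>\<^sub>m P_Omega n \<Omega> X"
  unfolding P_Omega_def by (rule eq_matI) auto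

lemma P_Omega_eq_self_if_compl_zero:
  assumes "X \<in> carrier_mat n n" "P_Omega n (- \<Omega>) X = 0\<^sub>m n n" shows "P_Omega n \<Omega> X = X"
proof (rule eq_matI)
  fix i j assume ij: "i < dim_row X" "j < dim_col X"
  then have "P_Omega n (- \<Omega>) X $$ (i,j) = 0" using assms by simp
  then show "P_Omega n \<Omega> X $$ (i,j) = X $$ (i,j)" using ij assms(1)
    by (auto simp: P_Omega_def split: if_splits)
qed (use assms in \<open>auto simp: P_Omega_def\<close>)

lemma frob_norm_le_map_op_norm:
  assumes bound: "\<And>X. X \<in> carrier_mat n n \<Longrightarrow> frob_norm n (\<A> X) \<le> frob_norm n X"
    and X: "X \<in> carrier_mat n n" "frob_norm n X \<le> 1"
  shows "frob_norm n (\<A> X) \<le> map_op_norm n \<A>"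
  unfolding map_op_norm_def
proof (rule cSup_upper)
  show "frob_norm n (\<A> X) \<in> {frob_norm n (\<A> X) | X. X \<in> carrier_mat n n \<and> frob_norm n X \<le> 1}"
    using X by blast
  show "bdd_above {frob_norm n (\<A> X) | X. X \<in> carrier_mat n n \<and> frob_norm n X \<le> 1}"
    by (rule bdd_aboveI[of _ 1]) (use bound order_trans in blast)
qed

text \<open>Normalising \<open>H\<close> would give a unit fixed point of \<open>P\<^sub>\<Omega> P\<^sub>T\<close>.\<close>
lemma tangent_support_trivial:
  assumes U: "U \<in> carrier_mat n r" and V: "V \<in> carrier_mat n r"
    and UO: "transpose_mat U * U = 1\<^sub>m r" and VO: "transpose_mat V * V = 1\<^sub>m r"
    and H: "H \<in> carrier_mat n n" and H_T: "P_T_compl n U V H = 0\<^sub>m n n"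
    and H_\<Omega>: "P_Omega n (- \<Omega>) H = 0\<^sub>m n n"
    and op: "map_op_norm n (\<lambda>X. P_Omega n \<Omega> (P_T n r U V X)) < 1"
  shows "H = 0\<^sub>m n n"
proof (rule ccontr)
  assume "H \<noteq> 0\<^sub>m n n"
  then have pos: "frob_norm n H > 0"
    using trace_inner_self_nonneg[of n H] trace_inner_self_eq_0D[OF H] unfolding frob_norm_def
    by fastforce
  have fixed: "P_Omega n \<Omega> (P_T n r U V (c \<cdot>\<^sub>m H)) = c \<cdot>\<^sub>m H" for c
  proof -
    have "tangent_proj n U V H = H" using H H_T unfolding tangent_proj_def by auto
    then show ?thesis
      using P_T_eq_tangent_proj[OF U V UO VO] tangent_proj_smult[OF U V H] P_Omega_smult[OF H]
        P_Omega_eq_self_if_compl_zero[OF H H_\<Omega>] H by simp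
  qed
  have nonexp: "frob_norm n (P_Omega n \<Omega> (P_T n r U V X))
      \<le> frob_norm n X" if X: "X \<in> carrier_mat n n" for X
    using trace_inner_P_Omega_self_le[of n \<Omega> "tangent_proj n U V X"]
      trace_inner_tangent_proj_self_le[OF U V UO VO X]
    unfolding frob_norm_def P_T_eq_tangent_proj[OF U V UO VO X] by simp
  define X where "X = (1 / frob_norm n H) \<cdot>\<^sub>m H"
  have X: "X \<in> carrier_mat n n" "frob_norm n X = 1"
    unfolding X_def using H pos frob_norm_smult[OF H] by auto
  have "1 \<le> map_op_norm n (\<lambda>X. P_Omega n \<Omega> (P_T n r U V X))"
    using frob_norm_le_map_op_norm[OF nonexp X(1)] X fixed unfolding X_def by simp
  then show False using op by simp
qed

section \<open>The certificate inequality\<close>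

lemma mult_mat_diag_transpose_carrier[simp]:
  "U \<in> carrier_mat n r \<Longrightarrow> V \<in> carrier_mat n r \<Longrightarrow> U * mat_diag r s * transpose_mat V \<in> carrier_mat n n"
  by (meson mat_diag_dim mult_carrier_mat transpose_carrier_mat)

lemma nuclear_norm_mult_mat_diag_le:
  assumes U: "U \<in> carrier_mat n r" and V: "V \<in> carrier_mat n r"
    and UO: "transpose_mat U * U = 1\<^sub>m r" and VO: "transpose_mat V * V = 1\<^sub>m r" and s: "\<forall>k<r. s k \<ge> 0"
  shows "nuclear_norm n (U * mat_diag r s * transpose_mat V) \<le> (\<Sum>k<r. s k)"
proof -
  have "U * mat_diag r s * transpose_mat V \<in> carrier_mat n n" using U V by simp
  then obtain P Q \<sigma> where sv: "is_svd n (U * mat_diag r s * transpose_mat V) P Q \<sigma>"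
    using is_svd_exists by blast
  then have "nuclear_norm n (U * mat_diag r s * transpose_mat V) =
      trace_inner n (P * transpose_mat Q) (U * mat_diag r s * transpose_mat V)"
    using nuclear_norm_eq_sum[OF sv] trace_inner_orthogonal_factors[of P n n Q \<sigma>]
      unfolding is_svd_def by auto
  also have "\<dots> \<le> 1 * (\<Sum>k<r. s k)"
    using sv spectral_bounded_orthogonal_mult unfolding is_svd_def
    by (intro trace_inner_le_sum_singular_values[OF U V UO VO s]) auto
  finally show ?thesis by simp
qed

text \<open>Pairing with the contraction \<open>U V\<^sup>T + P\<^sub>T\<^sub>\<bottom>(P Q\<^sup>T)\<close>, where \<open>P diag(\<sigma>) Q\<^sup>T\<close> is an SVD of
  \<open>P\<^sub>T\<^sub>\<bottom> H\<close>.\<close>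
lemma nuclear_norm_subgradient:
  assumes U: "U \<in> carrier_mat n r" and V: "V \<in> carrier_mat n r"
    and UO: "transpose_mat U * U = 1\<^sub>m r" and VO: "transpose_mat V * V = 1\<^sub>m r" and s: "\<forall>k<r. s k \<ge> 0"
    and H: "H \<in> carrier_mat n n"
  shows "nuclear_norm n (U * mat_diag r s * transpose_mat V) + trace_inner n (U * transpose_mat V) H
      + nuclear_norm n (P_T_compl n U V H) \<le> nuclear_norm n (U * mat_diag r s * transpose_mat V + H)"
proof -
  define L0 where "L0 = U * mat_diag r s * transpose_mat V"
  have L0c: "L0 \<in> carrier_mat n n" and UVc: "U * transpose_mat V \<in> carrier_mat n n"
    unfolding L0_def using U V by auto
  have "P_T_compl n U V H \<in> carrier_mat n n" using U V H by simp
  then obtain P Q \<sigma> where sv: "is_svd n (P_T_compl n U V H) P Q \<sigma>" using is_svd_exists by blast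
  then have P: "P \<in> carrier_mat n n" and Q: "Q \<in> carrier_mat n n"
    and PQ: "P * transpose_mat Q \<in> carrier_mat n n"
    and PQ_bound: "spectral_bounded n 1 (P * transpose_mat Q)"
    using spectral_bounded_orthogonal_mult unfolding is_svd_def by auto
  define Z where "Z = P_T_compl n U V (P * transpose_mat Q)"
  have Zc: "Z \<in> carrier_mat n n" unfolding Z_def using U V PQ by simp
  have "trace_inner n (U * transpose_mat V) L0 = (\<Sum>k<r. s k)"
    unfolding L0_def by (rule trace_inner_orthogonal_factors[OF U V UO VO])
  moreover have "trace_inner n Z L0 = 0"
    using trace_inner_P_T_compl_adjoint[OF U V PQ L0c]
      P_T_compl_eq_0_on_tangent_space[OF U V UO VO mult_mat_transpose_in_tangent_space[OF U V]]
    unfolding Z_def L0_def by simp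
  moreover have "trace_inner n Z H = nuclear_norm n (P_T_compl n U V H)"
    using trace_inner_P_T_compl_adjoint[OF U V PQ H] nuclear_norm_eq_sum[OF sv]
      trace_inner_orthogonal_factors[OF P Q] sv unfolding Z_def is_svd_def by auto
  ultimately have "trace_inner n (U * transpose_mat V + Z) (L0 + H) =
      (\<Sum>k<r. s k) + trace_inner n (U * transpose_mat V) H + nuclear_norm n (P_T_compl n U V H)"
    using L0c H UVc Zc by (simp add: trace_inner_add_left trace_inner_add_right)
  moreover have "trace_inner n (U * transpose_mat V + Z) (L0 + H) \<le> nuclear_norm n (L0 + H)"
    using trace_inner_le_nuclear_norm[of "L0 + H" n 1] L0c H
      spectral_bounded_add_P_T_compl[OF U V UO VO PQ_bound] unfolding Z_def by simp
  moreover have "nuclear_norm n L0 \<le> (\<Sum>k<r. s k)"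
    unfolding L0_def by (rule nuclear_norm_mult_mat_diag_le[OF U V UO VO s])
  ultimately show ?thesis unfolding L0_def by linarith
qed

lemma entrywise_l1_subgradient:
  fixes s h f m :: real
  assumes "s \<noteq> 0 \<Longrightarrow> f = 0" "\<bar>f\<bar> \<le> m"
  shows "\<bar>s\<bar> - (sgn s + f) * h + (1 - m) * (if s = 0 then \<bar>h\<bar> else 0) \<le> \<bar>s - h\<bar>"
proof (cases "s = 0")
  case True
  have "- (\<bar>f\<bar> * \<bar>h\<bar>) \<le> f * h" by (metis abs_ge_minus_self abs_mult minus_le_iff)
  moreover have "\<bar>f\<bar> * \<bar>h\<bar> \<le> m * \<bar>h\<bar>" using assms(2) by (simp add: mult_right_mono)
  ultimately show ?thesis using True by (simp add: algebra_simps)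
next
  case False
  have "sgn s * (s - h) \<le> \<bar>s - h\<bar>" by (cases "s > 0") (auto simp: sgn_if)
  then show ?thesis using False assms(1) by (simp add: algebra_simps abs_sgn)
qed

lemma l1_norm_subgradient:
  assumes S0: "S0 \<in> carrier_mat n n" and H: "H \<in> carrier_mat n n" and F: "F \<in> carrier_mat n n"
    and F_\<Omega>: "P_Omega n (support n S0) F = 0\<^sub>m n n"
  shows "l1_norm n S0 - trace_inner n (sgn_mat n S0 + F) H
      + (1 - max_norm n F) * l1_norm n (P_Omega n (- support n S0) H) \<le> l1_norm n (S0 - H)"
proof -
  have F0: "F $$ (i,j) = 0" if "i < n" "j < n" "S0 $$ (i,j) \<noteq> 0" for i j
    using arg_cong[OF F_\<Omega>, of "\<lambda>X. X $$ (i,j)"] that by (simp add: P_Omega_def support_def)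
  have off: "l1_norm n (P_Omega n (- support n S0) H) =
      (\<Sum>i<n. \<Sum>j<n. if S0 $$ (i,j) = 0 then \<bar>H $$ (i,j)\<bar> else 0)"
    unfolding l1_norm_def P_Omega_def support_def by (intro sum.cong refl) auto
  have "l1_norm n S0 - trace_inner n (sgn_mat n S0 + F) H
      + (1 - max_norm n F) * l1_norm n (P_Omega n (- support n S0) H)
    = (\<Sum>i<n. \<Sum>j<n. \<bar>S0 $$ (i,j)\<bar> - (sgn (S0 $$ (i,j)) + F $$ (i,j)) * H $$ (i,j)
        + (1 - max_norm n F) * (if S0 $$ (i,j) = 0 then \<bar>H $$ (i,j)\<bar> else 0))"
    using F unfolding off unfolding l1_norm_def trace_inner_def sgn_mat_def
    by (simp add: sum.distrib sum_subtractf sum_distrib_left)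
  also have "\<dots> \<le> (\<Sum>i<n. \<Sum>j<n. \<bar>S0 $$ (i,j) - H $$ (i,j)\<bar>)"
    by (intro sum_mono entrywise_l1_subgradient) (auto simp: F0 abs_index_le_max_norm)
  also have "\<dots> = l1_norm n (S0 - H)" unfolding l1_norm_def using S0 H by simp
  finally show ?thesis .
qed

lemma objective_increase_by_certificate:
  assumes U: "U \<in> carrier_mat n r" and V: "V \<in> carrier_mat n r"
    and UO: "transpose_mat U * U = 1\<^sub>m r" and VO: "transpose_mat V * V = 1\<^sub>m r" and s: "\<forall>k<r. s k \<ge> 0"
    and L0: "L0 = U * mat_diag r s * transpose_mat V"
    and S0: "S0 \<in> carrier_mat n n" and H: "H \<in> carrier_mat n n"
    and W: "W \<in> carrier_mat n n" and F: "F \<in> carrier_mat n n" and lam: "lam \<ge> 0"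
    and cert: "U * transpose_mat V + W = lam \<cdot>\<^sub>m (sgn_mat n S0 + F)"
    and W_T: "P_T_compl n U V W = W" and F_\<Omega>: "P_Omega n (support n S0) F = 0\<^sub>m n n"
  shows "nuclear_norm n L0 + lam * l1_norm n S0
      + (1 - spec_norm n W) * nuclear_norm n (P_T_compl n U V H)
      + lam * (1 - max_norm n F) * l1_norm n (P_Omega n (- support n S0) H)
    \<le> nuclear_norm n (L0 + H) + lam * l1_norm n (S0 - H)"
proof -
  have "trace_inner n (U * transpose_mat V) H + trace_inner n W H
      = lam * trace_inner n (sgn_mat n S0 + F) H"
    using U V W F trace_inner_add_left[of "U * transpose_mat V" n W H]
      trace_inner_smult_left[of "sgn_mat n S0 + F" n lam H]
    by (simp add: cert sgn_mat_def)
  moreover have "trace_inner n W H \<le> spec_norm n W * nuclear_norm n (P_T_compl n U V H)"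
    using trace_inner_P_T_compl_adjoint[OF U V W H] W_T
      trace_inner_le_spec_norm_nuclear_norm[OF W, of "P_T_compl n U V H"] U V H by simp
  moreover have "lam * (l1_norm n S0 - trace_inner n (sgn_mat n S0 + F) H
      + (1 - max_norm n F) * l1_norm n (P_Omega n (- support n S0) H)) \<le> lam * l1_norm n (S0 - H)"
    by (rule mult_left_mono[OF l1_norm_subgradient[OF S0 H F F_\<Omega>] lam])
  ultimately show ?thesis
    using nuclear_norm_subgradient[OF U V UO VO s H] unfolding L0[symmetric]
    by (simp add: algebra_simps)
qed

lemma l1_norm_nonneg: "l1_norm n X \<ge> 0"
  unfolding l1_norm_def by (intro sum_nonneg) simp

lemma l1_norm_eq_0D:
  assumes X: "X \<in> carrier_mat n n" and z: "l1_norm n X = 0" shows "X = 0\<^sub>m n n"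
proof -
  have "\<forall>i\<in>{..<n}. (\<Sum>j<n. \<bar>X $$ (i,j)\<bar>) = 0"
    using z unfolding l1_norm_def by (subst sum_nonneg_eq_0_iff[symmetric]) (auto intro: sum_nonneg)
  hence "\<forall>i<n. \<forall>j\<in>{..<n}. \<bar>X $$ (i,j)\<bar> = 0"
    by (subst (asm) sum_nonneg_eq_0_iff) auto
  thus ?thesis using X by (intro eq_matI) auto
qed

lemma objective_strict_increase:
  assumes U: "U \<in> carrier_mat n r" and V: "V \<in> carrier_mat n r"
    and UO: "transpose_mat U * U = 1\<^sub>m r" and VO: "transpose_mat V * V = 1\<^sub>m r" and s: "\<forall>k<r. s k \<ge> 0"
    and L0: "L0 = U * mat_diag r s * transpose_mat V"
    and S0: "S0 \<in> carrier_mat n n" and H: "H \<in> carrier_mat n n" and H0: "H \<noteq> 0\<^sub>m n n"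
    and W: "W \<in> carrier_mat n n" and F: "F \<in> carrier_mat n n" and lam: "lam > 0"
    and cert: "U * transpose_mat V + W = lam \<cdot>\<^sub>m (sgn_mat n S0 + F)"
    and W_T: "P_T_compl n U V W = W" and F_\<Omega>: "P_Omega n (support n S0) F = 0\<^sub>m n n"
    and W_norm: "spec_norm n W < 1" and F_norm: "max_norm n F < 1"
    and op: "map_op_norm n (\<lambda>X. P_Omega n (support n S0) (P_T n r U V X)) < 1"
  shows "nuclear_norm n L0 + lam * l1_norm n S0 < nuclear_norm n (L0 + H) + lam * l1_norm n (S0 - H)"
proof (rule ccontr)
  define N where "N = nuclear_norm n (P_T_compl n U V H)"
  define E where "E = l1_norm n (P_Omega n (- support n S0) H)"
  have "N \<ge> 0" "E \<ge> 0" unfolding N_def E_def using nuclear_norm_nonneg U V H l1_norm_nonneg by auto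
  then have "(1 - spec_norm n W) * N \<ge> 0" "lam * (1 - max_norm n F) * E \<ge> 0"
    using W_norm F_norm lam by simp_all
  moreover assume "\<not> ?thesis"
  ultimately have "(1 - spec_norm n W) * N = 0" "lam * (1 - max_norm n F) * E = 0"
    using objective_increase_by_certificate[OF U V UO VO s L0 S0 H W F less_imp_le[OF lam] cert W_T F_\<Omega>]
    unfolding N_def[symmetric] E_def[symmetric] by linarith+
  then have "N = 0" "E = 0" using W_norm F_norm lam by auto
  then have "P_T_compl n U V H = 0\<^sub>m n n" "P_Omega n (- support n S0) H = 0\<^sub>m n n"
    unfolding N_def E_def using nuclear_norm_eq_0D l1_norm_eq_0D U V H by (auto simp: P_Omega_def)
  with H0 show False using tangent_support_trivial[OF U V UO VO H _ _ op] by blast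
qed

lemma diagonal_mat_eq_mat_diag:
  assumes "S \<in> carrier_mat r r" "diagonal_mat S" shows "S = mat_diag r (\<lambda>i. S $$ (i,i))"
  by (rule eq_matI) (use assms in \<open>auto simp: mat_diag_def diagonal_mat_def\<close>)

theorem lemma2p3:
  fixes n r :: nat and L0 S0 U \<Sigma> V W F :: "real mat" and lam :: real
  assumes "L0 \<in> carrier_mat n n" and "S0 \<in> carrier_mat n n"
    and "reduced_svd n r L0 U \<Sigma> V"
    and "lam > 0"
    and "map_op_norm n (\<lambda>X. P_Omega n (support n S0) (P_T n r U V X)) < 1"
    and "W \<in> carrier_mat n n" and "F \<in> carrier_mat n n"
    and "U * transpose_mat V + W = lam \<cdot>\<^sub>m (sgn_mat n S0 + F)"
    and "P_T n r U V W = 0\<^sub>m n n"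
    and "spec_norm n W < 1"
    and "P_Omega n (support n S0) F = 0\<^sub>m n n"
    and "max_norm n F < 1"
  shows "unique_solution n lam (L0 + S0) L0 S0"
proof -
  define s where "s i = \<Sigma> $$ (i,i)" for i
  have U: "U \<in> carrier_mat n r" and V: "V \<in> carrier_mat n r"
    and UO: "transpose_mat U * U = 1\<^sub>m r" and VO: "transpose_mat V * V = 1\<^sub>m r"
    and s: "\<forall>k<r. s k \<ge> 0" and L0: "L0 = U * mat_diag r s * transpose_mat V"
    using assms(3) diagonal_mat_eq_mat_diag[of \<Sigma> r] unfolding reduced_svd_def s_def
    by (auto simp: less_imp_le)
  have W_T: "P_T_compl n U V W = W" by (rule P_T_compl_eq_self_if_P_T_zero[OF U V UO VO assms(6,9)])
  show ?thesis unfolding unique_solution_def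
  proof (intro conjI assms(1,2) refl allI impI, elim conjE)
    fix L S assume L: "L \<in> carrier_mat n n" and S: "S \<in> carrier_mat n n"
      and LS: "L + S = L0 + S0" and ne: "(L, S) \<noteq> (L0, S0)"
    have LS_entries: "L $$ (i,j) + S $$ (i,j) = L0 $$ (i,j) + S0 $$ (i,j)" if "i < n" "j < n" for i j
      using arg_cong[OF LS, of "\<lambda>X. X $$ (i,j)"] that L S assms(1,2) by simp
    define H where "H = L - L0"
    have H: "H \<in> carrier_mat n n" and "L = L0 + H" and "S = S0 - H"
      using L S assms(1,2) LS_entries unfolding H_def by (auto intro!: eq_matI simp: algebra_simps)
    moreover have "H \<noteq> 0\<^sub>m n n" using ne calculation assms(1,2) by auto
    ultimately show "nuclear_norm n L0 + lam * l1_norm n S0 < nuclear_norm n L + lam * l1_norm n S"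
      using objective_strict_increase[OF U V UO VO s L0 assms(2) H _ assms(6,7,4,8) W_T assms(11,10,12,5)]
      by simp
  qed
qed

end
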